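(* Let $K\in\mathbb N$, $p_1,\dots,p_K>0$ with $\sum_k p_k=1$, $\sigma_1^2,\dots,\sigma_K^2>0$, and $h\sim\sum_{k=1}^K p_k\mathcal N_{\mathbb C}(0,\sigma_k^2)$. For $M\in\mathbb N$ and $\mathbf a\in\mathbb C^M$ with $\|\mathbf a\|_2^2=M$, consider the noiseless one-bit observation $\mathbf r=Q(\mathbf a h)\in\mathbb C^M$, where $Q(x)=\frac1{\sqrt2}(\operatorname{sign}(\operatorname{Re}x)+\mathrm j\operatorname{sign}(\operatorname{Im}x))$ is applied element-wise. Then the mean square error $\mathbb E[|h-\mathbb E[h\mid\mathbf r]|^2]$ of the conditional mean estimator is minimized by the pilot sequence $[\mathbf a]_m=\exp(\mathrm j\psi_m)$ with equidistant phase shifts $\psi_m=\frac{\pi(m-1)}{2M}$, $m=1,\dots,M$.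
   Context: $\mathcal N_{\mathbb C}(0,\sigma^2)$ denotes the circularly symmetric complex Gaussian distribution with variance $\sigma^2$. The minimization is over the pilot vectors $\mathbf a$ satisfying the power constraint. *)

theory Defs
  imports "HOL-Probability.Probability"
begin

definition Qsign :: "complex \<Rightarrow> complex" where
  "Qsign x = (complex_of_real (sgn (Re x)) + \<i> * complex_of_real (sgn (Im x)))
             / complex_of_real (sqrt 2)"

text \<open>Density (w.r.t. Lebesgue measure on the complex plane) of the Gaussian mixture
  sum_k p_k CN(0, s2_k); CN(0,s) has density exp(-|z|^2/s)/(pi s).\<close>
definition gm_density :: "nat \<Rightarrow> (nat \<Rightarrow> real) \<Rightarrow> (nat \<Rightarrow> real) \<Rightarrow> complex \<Rightarrow> real" where
  "gm_density K p s2 z = (\<Sum>k<K. p k * exp (- ((cmod z)^2 / s2 k)) / (pi * s2 k))"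

definition gm_measure :: "nat \<Rightarrow> (nat \<Rightarrow> real) \<Rightarrow> (nat \<Rightarrow> real) \<Rightarrow> complex measure" where
  "gm_measure K p s2 = density lborel (\<lambda>z. ennreal (gm_density K p s2 z))"

text \<open>Observation r = Q(a h) in C^M; vectors in C^M are functions nat => complex with
  entries indexed 0..M-1 (entries outside are fixed to 0).\<close>
definition obs :: "nat \<Rightarrow> (nat \<Rightarrow> complex) \<Rightarrow> complex \<Rightarrow> (nat \<Rightarrow> complex)" where
  "obs M a z = (\<lambda>m. if m < M then Qsign (a m * z) else 0)"

definition cme :: "complex measure \<Rightarrow> nat \<Rightarrow> (nat \<Rightarrow> complex) \<Rightarrow> (nat \<Rightarrow> complex) \<Rightarrow> complex" where
  "cme \<mu> M a v = (LINT z|\<mu>. indicator {z. obs M a z = v} z *\<^sub>R z)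
                   / complex_of_real (measure \<mu> {z. obs M a z = v})"

definition mse :: "complex measure \<Rightarrow> nat \<Rightarrow> (nat \<Rightarrow> complex) \<Rightarrow> real" where
  "mse \<mu> M a = (LINT z|\<mu>. (cmod (z - cme \<mu> M a (obs M a z)))^2)"

text \<open>Equidistant-phase pilot; 0-based index m corresponds to paper index m+1,
  so psi = pi * m / (2M).\<close>
definition equi_pilot :: "nat \<Rightarrow> nat \<Rightarrow> complex" where
  "equi_pilot M m = exp (\<i> * complex_of_real (pi * real m / (2 * real M)))"

end

theory Submission
  imports Defs
begin

(*
  Let mu be the law of h.  It is invariant under rotations, lines through 0 are mu-null and
  E|h|^2 < oo; nothing else about the Gaussian mixture is used (the weights need not even sum
  to one).

  For a pilot a, call theta critical if some a_m e^(j theta) lies on a coordinate axis: these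
  are the angles k pi/2 - arg a_m, so there are at most 4M of them per turn and consecutive
  ones are at most pi/2 apart.  The observation Q(a h) is constant on each open sector between
  consecutive critical angles, so every estimator of h from r is constant on these sectors and
  its error is at least E|h|^2 - sum_S |E[h; S]|^2 / mu(S).  By rotation invariance a sector of
  width w <= pi/2 contributes K psi(w) with psi(w) = (1 - cos w) / w and a constant K >= 0.
  Since psi is concave on (0, pi) and its tangents have nonnegative intercepts, under
  sum w = 2 pi with at most 4M sectors the total is largest for 4M sectors of width pi/(2M).
  The equidistant pilot has exactly these sectors and its observation tells them apart, so its
  conditional mean estimator attains the bound.
*)

section \<open>Rotations of the complex plane\<close>

text \<open>The library proves invariance of Lebesgue measure under orthogonal maps only on
  \<open>real^'n\<close>; rotations of the complex plane are transported there along \<open>\<complex> \<cong> real^2\<close>.\<close>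

definition vec_of_complex :: "complex \<Rightarrow> real^2" where
  "vec_of_complex z = (\<chi> k. if k = 1 then Re z else Im z)"
definition complex_of_vec :: "real^2 \<Rightarrow> complex" where
  "complex_of_vec v = Complex (v $ 1) (v $ 2)"

lemma complex_of_vec_inverse[simp]: "complex_of_vec (vec_of_complex z) = z"
  by (simp add: complex_of_vec_def vec_of_complex_def complex_eq_iff)
lemma vec_of_complex_inverse[simp]: "vec_of_complex (complex_of_vec v) = v"
  by (simp add: complex_of_vec_def vec_of_complex_def vec_eq_iff forall_2)

lemma linear_complex_of_vec: "linear complex_of_vec"
  by (rule linearI) (auto simp: complex_of_vec_def complex_eq_iff)
lemma linear_vec_of_complex: "linear vec_of_complex"
  by (rule linearI) (auto simp: vec_of_complex_def vec_eq_iff)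

lemma complex_of_vec_measurable[measurable]: "complex_of_vec \<in> borel_measurable borel"
  by (intro borel_measurable_continuous_onI linear_continuous_on linear_conv_bounded_linear[THEN iffD1] linear_complex_of_vec)

lemma lborel_complex_eq_distr_vec: "(lborel :: complex measure) = distr lborel borel complex_of_vec"
proof (rule lborel_eqI)
  fix l u :: complex
  assume le: "\<And>b. b \<in> Basis \<Longrightarrow> l \<bullet> b \<le> u \<bullet> b"
  have vimage_box: "complex_of_vec -` box l u = box (vec_of_complex l) (vec_of_complex u)"
  proof -
    have "z \<in> box l u \<longleftrightarrow> Re l < Re z \<and> Re z < Re u \<and> Im l < Im z \<and> Im z < Im u" for z
      by (auto simp: mem_box Basis_complex_def)
    moreover have "x \<in> box (vec_of_complex l) (vec_of_complex u)
        \<longleftrightarrow> Re l < x$1 \<and> x$1 < Re u \<and> Im l < x$2 \<and> x$2 < Im u" for x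
      by (auto simp: mem_box_cart forall_2 vec_of_complex_def)
    ultimately show ?thesis by (auto simp: complex_of_vec_def)
  qed
  have le2: "\<forall>i. vec_of_complex l $ i \<le> vec_of_complex u $ i"
    using le[of 1] le[of \<i>] by (auto simp: vec_of_complex_def forall_2 Basis_complex_def)
  have p: "(\<Prod>b\<in>Basis. (vec_of_complex u - vec_of_complex l) \<bullet> b) = (\<Prod>i\<in>UNIV. (vec_of_complex u - vec_of_complex l) $ i)"
    by (simp add: Basis_vec_def cart_eq_inner_axis axis_eq_axis prod.UNION_disjoint)
  have p2: "(\<Prod>b\<in>Basis. (vec_of_complex u - vec_of_complex l) \<bullet> b) = (Re u - Re l) * (Im u - Im l)"
    unfolding p by (simp add: UNIV_2 vec_of_complex_def)
  have "emeasure lborel (box (vec_of_complex l) (vec_of_complex u)) = (\<Prod>b\<in>Basis. (vec_of_complex u - vec_of_complex l) \<bullet> b)"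
    by (rule emeasure_lborel_box) (use le2 in \<open>auto simp: Basis_vec_def cart_eq_inner_axis\<close>)
  then show "emeasure (distr lborel borel complex_of_vec) (box l u) = ennreal (prod ((\<bullet>) (u - l)) Basis)"
    by (simp add: emeasure_distr vimage_box p2 Basis_complex_def)
qed simp

lemma norm_vec_of_complex: "norm (vec_of_complex z) = cmod z"
  by (simp add: norm_vec_def L2_set_def UNIV_2 vec_of_complex_def cmod_def)

lemma orthogonal_transformation_rotation:
  "orthogonal_transformation (\<lambda>v. vec_of_complex (cis t * complex_of_vec v))"
  unfolding orthogonal_transformation
proof (intro conjI allI)
  show "linear (\<lambda>v. vec_of_complex (cis t * complex_of_vec v))"
    by (rule linearI) (simp_all add: linear_add[OF linear_complex_of_vec] linear_add[OF linear_vec_of_complex]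
        linear_scale[OF linear_complex_of_vec] linear_scale[OF linear_vec_of_complex] distrib_left)
  show "norm (vec_of_complex (cis t * complex_of_vec v)) = norm v" for v
    by (metis norm_vec_of_complex norm_mult norm_cis mult_1 vec_of_complex_inverse)
qed

lemma emeasure_lborel_complex_eq_vec:
  assumes "X \<in> sets borel"
  shows "emeasure lborel X = emeasure lborel (complex_of_vec -` X)"
  using assms by (subst lborel_complex_eq_distr_vec) (simp add: emeasure_distr)

lemma emeasure_orthogonal_image:
  fixes f :: "real^'n::{finite,wellorder} \<Rightarrow> real^'n::{finite,wellorder}"
  assumes "orthogonal_transformation f" and "S \<in> lmeasurable"
  shows "emeasure lebesgue (f ` S) = emeasure lebesgue S"
  using assms measurable_orthogonal_image measure_orthogonal_image
  by (metis emeasure_eq_measure2)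

lemma distr_lborel_rotation: "distr lborel borel (\<lambda>z::complex. cis t * z) = lborel"
proof (rule lborel_eqI[symmetric])
  fix l u :: complex
  assume le: "\<And>b. b \<in> Basis \<Longrightarrow> l \<bullet> b \<le> u \<bullet> b"
  define R where "R = (\<lambda>v. vec_of_complex (cis (-t) * complex_of_vec v))"
  define S where "S = complex_of_vec -` box l u"
  have rot_borel: "(\<lambda>z. cis t * z) \<in> borel_measurable borel"
    by (intro borel_measurable_continuous_onI continuous_intros)
  have S_borel: "S \<in> sets borel"
    using measurable_sets_borel[OF complex_of_vec_measurable, of "box l u"] by (simp add: S_def)
  have S_lmeasurable: "S \<in> lmeasurable"
    using emeasure_bounded_finite[of "box l u"] S_borel
    by (intro fmeasurableI) (simp_all add: S_def emeasure_lborel_complex_eq_vec[symmetric])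
  have vimage_eq: "complex_of_vec -` ((\<lambda>z. cis t * z) -` box l u) = R ` S"
  proof (intro set_eqI iffI)
    fix v assume "v \<in> complex_of_vec -` ((\<lambda>z. cis t * z) -` box l u)"
    then have "vec_of_complex (cis t * complex_of_vec v) \<in> S" by (simp add: S_def)
    moreover have "R (vec_of_complex (cis t * complex_of_vec v)) = v"
      by (simp add: R_def mult.assoc[symmetric] cis_mult)
    ultimately show "v \<in> R ` S" by (metis image_eqI)
  qed (auto simp: S_def R_def mult.assoc[symmetric] cis_mult)
  have vimage_borel: "complex_of_vec -` ((\<lambda>z. cis t * z) -` box l u) \<in> sets borel"
    by (intro measurable_sets_borel[OF complex_of_vec_measurable] measurable_sets_borel[OF rot_borel]) simp
  have "emeasure (distr lborel borel (\<lambda>z. cis t * z)) (box l u)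
      = emeasure lborel (complex_of_vec -` ((\<lambda>z. cis t * z) -` box l u))"
    using rot_borel emeasure_lborel_complex_eq_vec[OF measurable_sets_borel[OF rot_borel box_borel]]
    by (simp add: emeasure_distr)
  also have "\<dots> = emeasure lebesgue (R ` S)"
    using vimage_borel vimage_eq by simp
  also have "\<dots> = emeasure lebesgue S"
    using S_lmeasurable unfolding R_def by (intro emeasure_orthogonal_image orthogonal_transformation_rotation)
  also have "\<dots> = emeasure lborel (box l u)"
    using S_borel by (simp add: S_def emeasure_lborel_complex_eq_vec)
  finally show "emeasure (distr lborel borel (\<lambda>z. cis t * z)) (box l u) = (\<Prod>b\<in>Basis. (u - l) \<bullet> b)"
    using le by simp
qed simp

section \<open>Rotation-invariant channel laws\<close>

lemma integrable_exp_neg_square_div: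
  assumes "s > 0"
  shows "integrable lborel (\<lambda>x::real. exp (- x\<^sup>2 / s))"
proof -
  have "integrable lborel (\<lambda>x. sqrt (pi * s) * normal_density 0 (sqrt (s / 2)) x)"
    using integrable_normal_density[of "sqrt (s / 2)" 0] assms by simp
  moreover have "sqrt (pi * s) * normal_density 0 (sqrt (s / 2)) x = exp (- x\<^sup>2 / s)" for x
    using assms by (simp add: normal_density_def real_sqrt_mult)
  ultimately show ?thesis by simp
qed

lemma integrable_exp_neg_norm_square_div:
  assumes "s > 0"
  shows "integrable lborel (\<lambda>z::complex. exp (- (cmod z)\<^sup>2 / s))"
proof -
  interpret P: product_sigma_finite "\<lambda>_::complex. lborel :: real measure" by standard
  have "integrable (Pi\<^sub>M (Basis :: complex set) (\<lambda>_. lborel)) (\<lambda>x. \<Prod>b\<in>Basis. exp (- (x b)\<^sup>2 / s))"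
    using P.product_integrable_prod[where f="\<lambda>_ y. exp (- y\<^sup>2 / s)" and I="Basis :: complex set"]
      integrable_exp_neg_square_div[OF assms] by simp
  moreover have "exp (- (cmod (\<Sum>b\<in>Basis. x b *\<^sub>R b))\<^sup>2 / s) = (\<Prod>b\<in>Basis. exp (- (x b)\<^sup>2 / s))"
    for x :: "complex \<Rightarrow> real"
    by (simp add: Basis_complex_def cmod_power2 exp_add[symmetric] add_divide_distrib diff_divide_distrib)
  ultimately have "integrable (distr (Pi\<^sub>M Basis (\<lambda>_. lborel)) borel (\<lambda>f. \<Sum>b\<in>Basis. f b *\<^sub>R b))
      (\<lambda>z::complex. exp (- (cmod z)\<^sup>2 / s))"
    by (subst integrable_distr_eq) simp_all
  then show ?thesis by (simp add: lborel_eq[symmetric])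
qed

lemma integrable_norm_square_mult_exp_neg_norm_square_div:
  assumes "s > 0"
  shows "integrable lborel (\<lambda>z::complex. (cmod z)\<^sup>2 * exp (- (cmod z)\<^sup>2 / s))"
proof (rule Bochner_Integration.integrable_bound)
  show "integrable lborel (\<lambda>z::complex. s * exp (- (cmod z)\<^sup>2 / (2 * s)))"
    using integrable_exp_neg_norm_square_div[of "2 * s"] assms by simp
  show "AE z in lborel. norm ((cmod z)\<^sup>2 * exp (- (cmod z)\<^sup>2 / s)) \<le> norm (s * exp (- (cmod z)\<^sup>2 / (2 * s)))"
  proof (intro AE_I2)
    fix z :: complex
    define t where "t = (cmod z)\<^sup>2 / (2 * s)"
    have "2 * t \<le> exp t"
      using exp_ge_add_one_self[of "t - ln 2"] ln_2_less_1 assms by (simp add: exp_diff field_simps)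
    then have "2 * t * exp (-t) * exp (-t) \<le> exp (-t)"
      by (simp add: exp_minus field_simps)
    moreover have "(cmod z)\<^sup>2 * exp (- (cmod z)\<^sup>2 / s) = s * (2 * t * exp (-t) * exp (-t))"
      using assms by (simp add: t_def exp_add[symmetric] field_simps)
    ultimately have "(cmod z)\<^sup>2 * exp (- (cmod z)\<^sup>2 / s) \<le> s * exp (-t)"
      using assms by (metis mult_left_mono less_imp_le)
    then show "norm ((cmod z)\<^sup>2 * exp (- (cmod z)\<^sup>2 / s)) \<le> norm (s * exp (- (cmod z)\<^sup>2 / (2 * s)))"
      using assms by (simp add: t_def)
  qed
qed simp

locale rotation_invariant_measure =
  fixes \<mu> :: "complex measure"
  assumes sets_eq_borel: "sets \<mu> = sets borel"
    and finite_emeasure_space: "emeasure \<mu> (space \<mu>) \<noteq> \<infinity>"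
    and distr_rotation: "\<And>t. distr \<mu> \<mu> (\<lambda>z. cis t * z) = \<mu>"
    and lines_through_0_null: "\<And>w. w \<noteq> 0 \<Longrightarrow> {z. Im (cnj w * z) = 0} \<in> null_sets \<mu>"
    and integrable_norm_square: "integrable \<mu> (\<lambda>z. (cmod z)\<^sup>2)"

lemma lines_through_0_null_lborel:
  assumes "w \<noteq> 0"
  shows "{z::complex. Im (cnj w * z) = 0} \<in> null_sets lborel"
proof -
  have eq: "{z::complex. Im (cnj w * z) = 0} = {z. (\<i> * w) \<bullet> z = 0}"
    by (auto simp: inner_complex_def algebra_simps)
  have "negligible {z::complex. (\<i> * w) \<bullet> z = 0}"
    using assms by (intro negligible_hyperplane) simp
  then have "{z::complex. Im (cnj w * z) = 0} \<in> null_sets lebesgue"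
    unfolding eq using negligible_iff_null_sets by blast
  moreover have "{z::complex. Im (cnj w * z) = 0} \<in> sets borel"
    by measurable
  ultimately show ?thesis
    by (simp add: null_sets_completion_iff)
qed

lemma distr_density_rotation:
  fixes g :: "complex \<Rightarrow> real"
  assumes [measurable]: "g \<in> borel_measurable borel"
    and radial: "\<And>z. g (cis t * z) = g z"
  defines "\<nu> \<equiv> density lborel (\<lambda>z. ennreal (g z))"
  shows "distr \<nu> \<nu> (\<lambda>z. cis t * z) = \<nu>"
proof (rule measure_eqI)
  have rot_borel[measurable]: "(\<lambda>z::complex. cis t * z) \<in> borel_measurable borel"
    by (intro borel_measurable_continuous_onI continuous_intros)
  show "sets (distr \<nu> \<nu> (\<lambda>z. cis t * z)) = sets \<nu>" by simp
  fix A assume "A \<in> sets (distr \<nu> \<nu> (\<lambda>z. cis t * z))"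
  then have A[measurable]: "A \<in> sets borel" by (simp add: \<nu>_def)
  have "emeasure (distr \<nu> \<nu> (\<lambda>z. cis t * z)) A = emeasure \<nu> ((\<lambda>z. cis t * z) -` A)"
    by (simp add: \<nu>_def emeasure_distr)
  also have "\<dots> = (\<integral>\<^sup>+ z. ennreal (g z) * indicator ((\<lambda>z. cis t * z) -` A) z \<partial>lborel)"
    unfolding \<nu>_def by (subst emeasure_density) (auto intro: measurable_sets_borel[OF rot_borel A])
  also have "\<dots> = (\<integral>\<^sup>+ z. (\<lambda>y. ennreal (g y) * indicator A y) (cis t * z) \<partial>lborel)"
    by (simp add: radial indicator_def)
  also have "\<dots> = (\<integral>\<^sup>+ y. ennreal (g y) * indicator A y \<partial>distr lborel borel (\<lambda>z. cis t * z))"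
    by (subst nn_integral_distr) simp_all
  also have "\<dots> = emeasure \<nu> A"
    by (simp add: \<nu>_def distr_lborel_rotation emeasure_density)
  finally show "emeasure (distr \<nu> \<nu> (\<lambda>z. cis t * z)) A = emeasure \<nu> A" .
qed

lemma rotation_invariant_measure_density:
  fixes g :: "complex \<Rightarrow> real"
  assumes [measurable]: "g \<in> borel_measurable borel"
    and nonneg: "\<And>z. g z \<ge> 0"
    and radial: "\<And>t z. g (cis t * z) = g z"
    and integrable: "integrable lborel g"
    and integrable_second_moment: "integrable lborel (\<lambda>z. g z * (cmod z)\<^sup>2)"
  shows "rotation_invariant_measure (density lborel (\<lambda>z. ennreal (g z)))"
proof
  show "sets (density lborel (\<lambda>z. ennreal (g z))) = sets borel" by simp
  have "emeasure (density lborel (\<lambda>z. ennreal (g z))) UNIV = (\<integral>\<^sup>+ z. ennreal (g z) \<partial>lborel)"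
    by (simp add: emeasure_density)
  also have "\<dots> < \<infinity>"
    using integrable nonneg by (simp add: integrable_iff_bounded)
  finally show "emeasure (density lborel (\<lambda>z. ennreal (g z))) (space (density lborel (\<lambda>z. ennreal (g z)))) \<noteq> \<infinity>"
    by simp
  show "distr (density lborel (\<lambda>z. ennreal (g z))) (density lborel (\<lambda>z. ennreal (g z))) (\<lambda>z. cis t * z)
      = density lborel (\<lambda>z. ennreal (g z))" for t
    using radial by (intro distr_density_rotation) simp_all
  show "{z. Im (cnj w * z) = 0} \<in> null_sets (density lborel (\<lambda>z. ennreal (g z)))" if "w \<noteq> 0" for w
    using lines_through_0_null_lborel[OF that] by (subst null_sets_density_iff) (auto dest: AE_not_in)
  show "integrable (density lborel (\<lambda>z. ennreal (g z))) (\<lambda>z. (cmod z)\<^sup>2)"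
    using integrable_second_moment nonneg by (subst integrable_density) simp_all
qed

lemma rotation_invariant_measure_gm_measure:
  assumes p: "\<forall>k<K. p k > 0" and s: "\<forall>k<K. s2 k > 0"
  shows "rotation_invariant_measure (gm_measure K p s2)"
  unfolding gm_measure_def
proof (rule rotation_invariant_measure_density)
  have gm_sum: "gm_density K p s2 = (\<lambda>z. \<Sum>k<K. p k / (pi * s2 k) * exp (- (cmod z)\<^sup>2 / s2 k))"
    by (simp add: gm_density_def fun_eq_iff)
  show "gm_density K p s2 \<in> borel_measurable borel"
    unfolding gm_sum by measurable
  show "0 \<le> gm_density K p s2 z" for z
    unfolding gm_sum using p s by (intro sum_nonneg) (auto intro!: divide_nonneg_pos)
  show "gm_density K p s2 (cis t * z) = gm_density K p s2 z" for t z
    by (simp add: gm_density_def norm_mult)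
  show "integrable lborel (gm_density K p s2)"
    unfolding gm_sum using s
    by (intro Bochner_Integration.integrable_sum integrable_mult_right integrable_exp_neg_norm_square_div) auto
  have "integrable lborel (\<lambda>z. p k / (pi * s2 k) * ((cmod z)\<^sup>2 * exp (- (cmod z)\<^sup>2 / s2 k)))"
    if "k < K" for k
    using s that by (intro integrable_mult_right integrable_norm_square_mult_exp_neg_norm_square_div) auto
  then have "integrable lborel
      (\<lambda>z. \<Sum>k<K. p k / (pi * s2 k) * ((cmod z)\<^sup>2 * exp (- (cmod z)\<^sup>2 / s2 k)))"
    by (intro Bochner_Integration.integrable_sum) auto
  then show "integrable lborel (\<lambda>z. gm_density K p s2 z * (cmod z)\<^sup>2)"
    unfolding gm_sum sum_distrib_right by (simp add: mult_ac)
qed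

section \<open>Sectors\<close>

text \<open>\<open>rot_Im \<alpha> z = \<bar>z\<bar> sin (arg z - \<alpha>)\<close>. For \<open>\<beta> - \<alpha> \<le> pi\<close>, \<open>sector \<alpha> \<beta>\<close> is the open sector
  \<open>\<alpha> < arg z < \<beta>\<close>, and \<open>angle_line \<gamma>\<close> is the line through 0 at angle \<open>\<gamma>\<close>.\<close>

definition rot_Im :: "real \<Rightarrow> complex \<Rightarrow> real" where
  "rot_Im c z = Im (cnj (cis c) * z)"

lemma rot_Im_measurable[measurable]: "rot_Im c \<in> borel_measurable borel"
  unfolding rot_Im_def by measurable

definition sector :: "real \<Rightarrow> real \<Rightarrow> complex set" where
  "sector \<alpha> \<beta> = {z. 0 < rot_Im \<alpha> z \<and> rot_Im \<beta> z < 0}"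

definition angle_line :: "real \<Rightarrow> complex set" where
  "angle_line \<gamma> = {z. rot_Im \<gamma> z = 0}"

lemma sector_borel[measurable]: "sector \<alpha> \<beta> \<in> sets borel"
  unfolding sector_def by measurable

lemma angle_line_borel[measurable]: "angle_line \<gamma> \<in> sets borel"
  unfolding angle_line_def by measurable

lemma polar_form_in_window: "\<exists>\<theta>. t0 \<le> \<theta> \<and> \<theta> < t0 + 2 * pi \<and> z = complex_of_real (cmod z) * cis \<theta>"
proof -
  define w where "w = z * cis (- t0)"
  define A where "A = Arg2pi w"
  have A: "0 \<le> A" "A < 2 * pi" "is_Arg w A" using Arg2pi[of w] by (auto simp: A_def)
  have nw: "cmod w = cmod z" by (simp add: w_def norm_mult)
  have wA: "w = complex_of_real (cmod z) * cis A"
    using A(3) nw by (simp add: is_Arg_def cis_conv_exp)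
  have "z = z * (cis (- t0) * cis t0)" by (simp add: cis_mult)
  also have "\<dots> = w * cis t0" by (simp add: w_def mult.assoc)
  also have "\<dots> = complex_of_real (cmod z) * cis (t0 + A)"
    using wA by (simp add: mult.assoc cis_mult add.commute)
  finally have "z = complex_of_real (cmod z) * cis (t0 + A)" .
  then show ?thesis using A by (intro exI[of _ "t0 + A"]) auto
qed

lemma rot_Im_polar: "rot_Im \<alpha> (complex_of_real r * cis \<theta>) = r * sin (\<theta> - \<alpha>)"
  by (simp add: rot_Im_def sin_diff algebra_simps)

lemma sin_pos_imp_in_0_pi: "sin x > 0 \<Longrightarrow> 0 \<le> x \<Longrightarrow> x < 2 * pi \<Longrightarrow> x < pi \<and> 0 < x"
  by (metis linorder_not_le order_le_less sin_zero sin_le_zero not_less)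

lemma sin_neg_imp_neg: "sin x < 0 \<Longrightarrow> - pi < x \<Longrightarrow> x < pi \<Longrightarrow> x < 0"
  by (meson linorder_not_le order_less_imp_le sin_ge_zero)

lemma sin_less_zero_pi: "- pi < x \<Longrightarrow> x < 0 \<Longrightarrow> sin x < 0"
  using sin_gt_zero[of "-x"] by simp

lemma polar_in_sector:
  assumes "\<beta> - \<alpha> \<le> pi" "\<alpha> < \<theta>" "\<theta> < \<beta>" "r > 0"
  shows "complex_of_real r * cis \<theta> \<in> sector \<alpha> \<beta>"
  unfolding sector_def mem_Collect_eq rot_Im_polar using assms
  by (auto intro!: mult_pos_pos sin_gt_zero mult_pos_neg sin_less_zero_pi)

lemma sector_polarE:
  assumes "z \<in> sector \<alpha> \<beta>" "\<alpha> < \<beta>" "\<beta> - \<alpha> \<le> pi"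
  obtains \<theta> where "\<alpha> < \<theta>" "\<theta> < \<beta>" "z = complex_of_real (cmod z) * cis \<theta>" "cmod z > 0"
proof -
  obtain \<theta> where \<theta>: "\<alpha> \<le> \<theta>" "\<theta> < \<alpha> + 2 * pi" and z_polar: "z = complex_of_real (cmod z) * cis \<theta>"
    using polar_form_in_window[of \<alpha> z] by auto
  have rot_Im_z: "rot_Im \<gamma> z = cmod z * sin (\<theta> - \<gamma>)" for \<gamma>
    using arg_cong[OF z_polar, of "rot_Im \<gamma>"] by (simp only: rot_Im_polar)
  have "z \<noteq> 0" using assms(1) by (auto simp: sector_def rot_Im_def)
  then have r: "cmod z > 0" by simp
  have "sin (\<theta> - \<alpha>) > 0" "sin (\<theta> - \<beta>) < 0"
    using assms(1) r by (simp_all add: sector_def rot_Im_z zero_less_mult_iff mult_less_0_iff)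
  then have "0 < \<theta> - \<alpha>" "\<theta> - \<alpha> < pi" "\<theta> - \<beta> < 0"
    using sin_pos_imp_in_0_pi[of "\<theta> - \<alpha>"] sin_neg_imp_neg[of "\<theta> - \<beta>"] \<theta> assms(2,3) by auto
  then show ?thesis using that[of \<theta>] z_polar r by auto
qed

lemma vimage_rotation_sector: "(\<lambda>z. cis t * z) -` sector (\<alpha> + t) (\<beta> + t) = sector \<alpha> \<beta>"
proof -
  have "rot_Im (x + t) (cis t * z) = rot_Im x z" for x z
    unfolding rot_Im_def by (simp only: cis_cnj mult.assoc[symmetric] cis_mult) simp
  then show ?thesis by (auto simp: sector_def)
qed

lemma sector_mono:
  assumes "\<alpha> \<le> \<alpha>'" "\<beta>' \<le> \<beta>" "\<alpha>' < \<beta>'" "\<beta> - \<alpha> \<le> pi"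
  shows "sector \<alpha>' \<beta>' \<subseteq> sector \<alpha> \<beta>"
proof
  fix z assume "z \<in> sector \<alpha>' \<beta>'"
  then obtain \<theta> where "\<alpha>' < \<theta>" "\<theta> < \<beta>'" "z = complex_of_real (cmod z) * cis \<theta>" "cmod z > 0"
    using sector_polarE assms by (metis diff_mono order_trans)
  then show "z \<in> sector \<alpha> \<beta>" using polar_in_sector[of \<beta> \<alpha> \<theta> "cmod z"] assms by auto
qed

lemma sector_split:
  assumes "\<alpha> < \<gamma>" "\<gamma> < \<beta>" "\<beta> - \<alpha> \<le> pi"
  shows "sector \<alpha> \<gamma> \<inter> sector \<gamma> \<beta> = {}"
    and "sector \<alpha> \<gamma> \<subseteq> sector \<alpha> \<beta>" "sector \<gamma> \<beta> \<subseteq> sector \<alpha> \<beta>"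
    and "sector \<alpha> \<beta> \<subseteq> sector \<alpha> \<gamma> \<union> sector \<gamma> \<beta> \<union> angle_line \<gamma>"
proof -
  show "sector \<alpha> \<gamma> \<inter> sector \<gamma> \<beta> = {}" by (auto simp: sector_def)
  show "sector \<alpha> \<gamma> \<subseteq> sector \<alpha> \<beta>" using assms by (intro sector_mono) auto
  show "sector \<gamma> \<beta> \<subseteq> sector \<alpha> \<beta>" using assms by (intro sector_mono) auto
  show "sector \<alpha> \<beta> \<subseteq> sector \<alpha> \<gamma> \<union> sector \<gamma> \<beta> \<union> angle_line \<gamma>"
    by (auto simp: sector_def angle_line_def)
qed

lemma sector_empty: "sector \<alpha> \<alpha> = {}"
  by (auto simp: sector_def)

context rotation_invariant_measure
begin

declare sets_eq_borel[measurable_cong]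

lemma space_eq_UNIV[simp]: "space \<mu> = UNIV"
  using sets_eq_imp_space_eq[OF sets_eq_borel] by simp

sublocale finite_measure \<mu>
  using finite_emeasure_space by (rule finite_measureI)

lemma integrable_id: "integrable \<mu> (\<lambda>z. z)"
proof (rule integrable_norm_cancel)
  have "integrable \<mu> (\<lambda>z. (norm z)\<^sup>2)"
    using integrable_norm_square by simp
  then show "integrable \<mu> (\<lambda>z. norm z)"
    by (rule square_integrable_imp_integrable[rotated]) (simp add: measurable_cong_sets[OF sets_eq_borel refl])
  show "(\<lambda>z. z) \<in> borel_measurable \<mu>"
    by (simp add: measurable_cong_sets[OF sets_eq_borel refl])
qed

lemma integrable_indicator_borel[simp, intro]:
  "A \<in> sets borel \<Longrightarrow> integrable \<mu> (indicator A :: complex \<Rightarrow> real)"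
  using emeasure_finite[of A]
  by (intro integrable_real_indicator) (simp_all add: less_top[symmetric] sets_eq_borel)

lemma rotation_measurable: "(\<lambda>z. cis t * z) \<in> measurable \<mu> \<mu>"
  by (simp add: measurable_cong_sets[OF sets_eq_borel sets_eq_borel])

lemma integral_rotation:
  fixes f :: "complex \<Rightarrow> 'b::{banach,second_countable_topology}"
  assumes [measurable]: "f \<in> borel_measurable borel"
  shows "(\<integral>z. f (cis t * z) \<partial>\<mu>) = (\<integral>z. f z \<partial>\<mu>)"
proof -
  have "(\<integral>z. f z \<partial>\<mu>) = (\<integral>z. f z \<partial>distr \<mu> \<mu> (\<lambda>z. cis t * z))" by (simp add: distr_rotation)
  also have "\<dots> = (\<integral>z. f (cis t * z) \<partial>\<mu>)"
    by (rule integral_distr) (simp_all add: rotation_measurable measurable_cong_sets[OF sets_eq_borel])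
  finally show ?thesis by simp
qed

lemma measure_vimage_rotation:
  assumes "A \<in> sets borel"
  shows "measure \<mu> ((\<lambda>z. cis t * z) -` A) = measure \<mu> A"
proof -
  have "measure \<mu> A = measure (distr \<mu> \<mu> (\<lambda>z. cis t * z)) A" by (simp add: distr_rotation)
  also have "\<dots> = measure \<mu> ((\<lambda>z. cis t * z) -` A)"
    using assms by (subst measure_distr) (simp_all add: rotation_measurable sets_eq_borel)
  finally show ?thesis by simp
qed

lemma angle_line_null: "angle_line \<gamma> \<in> null_sets \<mu>"
  using lines_through_0_null[of "cis \<gamma>"] by (simp add: angle_line_def rot_Im_def)

definition moment :: "complex set \<Rightarrow> complex" where
  "moment S = (LINT z|\<mu>. indicator S z *\<^sub>R z)"

lemma measure_sector_rotate: "measure \<mu> (sector (\<alpha> + t) (\<beta> + t)) = measure \<mu> (sector \<alpha> \<beta>)"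
  using measure_vimage_rotation[of "sector (\<alpha> + t) (\<beta> + t)" t] by (simp add: vimage_rotation_sector)

lemma moment_sector_rotate: "moment (sector (\<alpha> + t) (\<beta> + t)) = cis t * moment (sector \<alpha> \<beta>)"
proof -
  have "moment (sector (\<alpha> + t) (\<beta> + t)) = (LINT z|\<mu>. indicator (sector (\<alpha> + t) (\<beta> + t)) (cis t * z) *\<^sub>R (cis t * z))"
    unfolding moment_def by (rule integral_rotation[symmetric]) simp
  also have "\<dots> = (LINT z|\<mu>. cis t * (indicator (sector \<alpha> \<beta>) z *\<^sub>R z))"
  proof (rule Bochner_Integration.integral_cong[OF refl])
    fix z
    have "indicator (sector (\<alpha> + t) (\<beta> + t)) (cis t * z) = (indicator (sector \<alpha> \<beta>) z :: real)"
      using vimage_rotation_sector[of t \<alpha> \<beta>] by (auto simp: indicator_def)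
    then show "indicator (sector (\<alpha> + t) (\<beta> + t)) (cis t * z) *\<^sub>R (cis t * z) = cis t * (indicator (sector \<alpha> \<beta>) z *\<^sub>R z)"
      by simp
  qed
  also have "\<dots> = cis t * moment (sector \<alpha> \<beta>)"
    unfolding moment_def by (rule integral_mult_right_zero)
  finally show ?thesis .
qed

lemma sector_additive:
  assumes "\<alpha> < \<gamma>" "\<gamma> < \<beta>" "\<beta> - \<alpha> \<le> pi"
  shows "measure \<mu> (sector \<alpha> \<beta>) = measure \<mu> (sector \<alpha> \<gamma>) + measure \<mu> (sector \<gamma> \<beta>)"
    and "moment (sector \<alpha> \<beta>) = moment (sector \<alpha> \<gamma>) + moment (sector \<gamma> \<beta>)"
proof -
  note sp = sector_split[OF assms]
  have ae: "AE z in \<mu>. indicator (sector \<alpha> \<beta>) z = (indicator (sector \<alpha> \<gamma>) z + indicator (sector \<gamma> \<beta>) z :: real)"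
  proof (rule AE_I'[OF angle_line_null])
    show "{z \<in> space \<mu>. \<not> indicator (sector \<alpha> \<beta>) z = (indicator (sector \<alpha> \<gamma>) z + indicator (sector \<gamma> \<beta>) z :: real)} \<subseteq> angle_line \<gamma>"
      using sp by (auto simp: indicator_def)
  qed
  have "measure \<mu> (sector \<alpha> \<beta>) = (LINT z|\<mu>. indicator (sector \<alpha> \<beta>) z)" by simp
  also have "\<dots> = (LINT z|\<mu>. indicator (sector \<alpha> \<gamma>) z + indicator (sector \<gamma> \<beta>) z)"
    by (rule integral_cong_AE) (simp_all add: ae)
  also have "\<dots> = measure \<mu> (sector \<alpha> \<gamma>) + measure \<mu> (sector \<gamma> \<beta>)"
    by (subst Bochner_Integration.integral_add) auto
  finally show "measure \<mu> (sector \<alpha> \<beta>) = measure \<mu> (sector \<alpha> \<gamma>) + measure \<mu> (sector \<gamma> \<beta>)" .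
  have "moment (sector \<alpha> \<beta>) = (LINT z|\<mu>. indicator (sector \<alpha> \<gamma>) z *\<^sub>R z + indicator (sector \<gamma> \<beta>) z *\<^sub>R z)"
    unfolding moment_def
    by (rule integral_cong_AE) (use ae in \<open>auto simp: scaleR_add_left[symmetric] elim!: AE_mp\<close>)
  also have "\<dots> = moment (sector \<alpha> \<gamma>) + moment (sector \<gamma> \<beta>)"
    unfolding moment_def
    by (rule Bochner_Integration.integral_add) (auto intro!: integrable_mult_indicator integrable_id)
  finally show "moment (sector \<alpha> \<beta>) = moment (sector \<alpha> \<gamma>) + moment (sector \<gamma> \<beta>)" .
qed

definition sector_measure :: "real \<Rightarrow> real" where "sector_measure w = measure \<mu> (sector 0 w)"
definition sector_moment :: "real \<Rightarrow> complex" where "sector_moment w = moment (sector 0 w)"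

lemma measure_sector_eq: "measure \<mu> (sector \<alpha> (\<alpha> + w)) = sector_measure w"
  using measure_sector_rotate[of 0 \<alpha> w] by (simp add: sector_measure_def add.commute)

lemma moment_sector_eq: "moment (sector \<alpha> (\<alpha> + w)) = cis \<alpha> * sector_moment w"
  using moment_sector_rotate[of 0 \<alpha> w] by (simp add: sector_moment_def add.commute)

lemma sector_measure_add: "0 < w1 \<Longrightarrow> 0 < w2 \<Longrightarrow> w1 + w2 \<le> pi \<Longrightarrow> sector_measure (w1 + w2) = sector_measure w1 + sector_measure w2"
  using sector_additive(1)[of 0 w1 "w1 + w2"] measure_sector_eq[of w1 w2] by (simp add: sector_measure_def)

lemma sector_moment_add: "0 < w1 \<Longrightarrow> 0 < w2 \<Longrightarrow> w1 + w2 \<le> pi \<Longrightarrow> sector_moment (w1 + w2) = sector_moment w1 + cis w1 * sector_moment w2"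
  using sector_additive(2)[of 0 w1 "w1 + w2"] moment_sector_eq[of w1 w2] by (simp add: sector_moment_def)

lemma sector_moment_eq:
  assumes "0 < w" "w \<le> pi / 2"
  shows "sector_moment w * (1 - \<i>) = sector_moment (pi/2) * (1 - cis w)"
proof -
  \<comment> \<open>split the sector of width \<open>w + pi/2\<close> at \<open>w\<close> and at \<open>pi/2\<close>\<close>
  have "sector_moment (w + pi/2) = sector_moment w + cis w * sector_moment (pi/2)"
    using assms by (intro sector_moment_add) auto
  moreover have "sector_moment (pi/2 + w) = sector_moment (pi/2) + cis (pi/2) * sector_moment w"
    using assms by (intro sector_moment_add) auto
  moreover have "cis (pi/2) = \<i>" by (simp add: complex_eq_iff)
  ultimately have "sector_moment w + cis w * sector_moment (pi/2) = sector_moment (pi/2) + \<i> * sector_moment w"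
    by (simp add: add.commute)
  then show ?thesis by (simp add: algebra_simps)
qed

lemma sector_measure_nonneg: "sector_measure w \<ge> 0" by (simp add: sector_measure_def)

lemma sector_measure_0: "sector_measure 0 = 0" by (simp add: sector_measure_def sector_empty)

lemma sector_measure_mono: "0 < w \<Longrightarrow> w \<le> w' \<Longrightarrow> w' \<le> pi \<Longrightarrow> sector_measure w \<le> sector_measure w'"
  unfolding sector_measure_def by (intro finite_measure_mono sector_mono) auto

lemma sector_measure_mult: "0 < d \<Longrightarrow> real k * d \<le> pi \<Longrightarrow> sector_measure (real k * d) = real k * sector_measure d"
proof (induction k)
  case 0 then show ?case by (simp add: sector_measure_0)
next
  case (Suc k)
  show ?case
  proof (cases "k = 0")
    case True then show ?thesis by simp
  next
    case False
    then have "real k * d \<le> pi" using Suc.prems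
      by (smt (verit, best) mult_right_mono of_nat_0_le_iff of_nat_Suc)
    then have "sector_measure (real k * d) = real k * sector_measure d" using Suc by simp
    moreover have "sector_measure (real k * d + d) = sector_measure (real k * d) + sector_measure d"
      using Suc.prems False by (intro sector_measure_add) (auto simp: algebra_simps)
    ultimately show ?thesis by (simp add: algebra_simps)
  qed
qed

lemma sector_measure_approx:
  assumes w: "0 < w" "w \<le> pi / 2" and n: "n \<ge> 1"
  shows "\<bar>sector_measure w - (2 * w / pi) * sector_measure (pi/2)\<bar> \<le> sector_measure (pi/2) / real n"
proof -
  define d where "d = pi / (2 * real n)"
  define k where "k = nat \<lfloor>w / d\<rfloor>"
  have d: "0 < d" "real n * d = pi / 2" "d \<le> pi / 2"
    using n by (simp_all add: d_def field_simps)
  have quarter: "sector_measure (pi/2) = real n * sector_measure d"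
    using sector_measure_mult[of d n] d by simp
  have "0 \<le> w / d" using w d by simp
  then have k: "real k \<le> w / d" "w / d < real k + 1"
    by (simp_all add: k_def)
  then have kd: "real k * d \<le> w" "w < (real k + 1) * d"
    using d by (simp_all add: field_simps)
  have "real k * sector_measure d \<le> sector_measure w"
  proof (cases "k = 0")
    case False
    then show ?thesis
      using sector_measure_mult[of d k] sector_measure_mono[of "real k * d" w] kd w d by simp
  qed (simp add: sector_measure_nonneg)
  moreover have "sector_measure w \<le> (real k + 1) * sector_measure d"
  proof -
    have "(real k + 1) * d \<le> pi" using kd(1) w d by (simp add: algebra_simps)
    then show ?thesis
      using sector_measure_mult[of d "Suc k"] sector_measure_mono[of w "(real k + 1) * d"] kd w d
      by (simp add: add.commute)
  qed
  moreover have "(2 * w / pi) * sector_measure (pi/2) = (w / d) * sector_measure d"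
    using n by (simp add: quarter d_def field_simps)
  moreover have "real k * sector_measure d \<le> (w / d) * sector_measure d"
    "(w / d) * sector_measure d \<le> (real k + 1) * sector_measure d"
    using k sector_measure_nonneg[of d] by (intro mult_right_mono; simp)+
  ultimately have "\<bar>sector_measure w - (2 * w / pi) * sector_measure (pi/2)\<bar> \<le> sector_measure d"
    by (simp add: abs_le_iff algebra_simps)
  then show ?thesis
    using n by (simp add: quarter)
qed

text \<open>An additive, monotone function of the opening angle is linear.\<close>

lemma sector_measure_linear:
  assumes "0 < w" "w \<le> pi / 2"
  shows "sector_measure w = (2 * w / pi) * sector_measure (pi/2)"
proof -
  have "(\<lambda>n. sector_measure (pi/2) / real n) \<longlonglongrightarrow> 0"
    by (rule lim_const_over_n)
  moreover have "\<forall>n\<ge>1. \<bar>sector_measure w - (2 * w / pi) * sector_measure (pi/2)\<bar> \<le> sector_measure (pi/2) / real n"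
    using sector_measure_approx[OF assms] by blast
  ultimately have "\<bar>sector_measure w - (2 * w / pi) * sector_measure (pi/2)\<bar> \<le> 0"
    by (intro LIMSEQ_le_const) blast+
  then show ?thesis by simp
qed

end

section \<open>Estimators constant on a partition\<close>

definition ae_partition :: "'a measure \<Rightarrow> 'i set \<Rightarrow> ('i \<Rightarrow> 'a set) \<Rightarrow> bool" where
  "ae_partition M I S \<longleftrightarrow> finite I \<and> (\<forall>i\<in>I. S i \<in> sets M) \<and> disjoint_family_on S I
     \<and> (AE z in M. z \<in> (\<Union>i\<in>I. S i))"

lemma norm_diff_square: "(cmod (z - c))\<^sup>2 = (cmod z)\<^sup>2 - 2 * Re (cnj c * z) + (cmod c)\<^sup>2"
  unfolding cmod_power2 by (simp add: algebra_simps power2_eq_square)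

context rotation_invariant_measure
begin

lemma moment_null: "S \<in> sets borel \<Longrightarrow> measure \<mu> S = 0 \<Longrightarrow> moment S = 0"
proof -
  assume S: "S \<in> sets borel" and m: "measure \<mu> S = 0"
  have Sm[measurable]: "S \<in> sets \<mu>" using S by (simp add: sets_eq_borel)
  have "S \<in> null_sets \<mu>" using m by (intro null_setsI) (simp_all add: emeasure_eq_measure)
  then have "AE z in \<mu>. indicator S z *\<^sub>R z = (0::complex)"
    by (rule AE_I') (auto simp: indicator_def)
  then show "moment S = 0" unfolding moment_def by (subst integral_cong_AE[where g="\<lambda>_. 0"]) simp_all
qed

lemma cell_error_expand:
  assumes S: "S \<in> sets borel"
  shows "(LINT z|\<mu>. indicator S z * (cmod (z - c))\<^sup>2)
       = (LINT z|\<mu>. indicator S z * (cmod z)\<^sup>2) - 2 * Re (cnj c * moment S) + (cmod c)\<^sup>2 * measure \<mu> S"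
proof -
  have i1: "integrable \<mu> (\<lambda>z. indicator S z * (cmod z)\<^sup>2)"
    using integrable_real_mult_indicator[OF _ integrable_norm_square, of S] S by (simp add: sets_eq_borel mult.commute)
  have i2: "integrable \<mu> (\<lambda>z. indicator S z *\<^sub>R z)"
    using S by (intro integrable_mult_indicator integrable_id) (simp add: sets_eq_borel)
  have i2': "integrable \<mu> (\<lambda>z. cnj c * (indicator S z *\<^sub>R z))"
    by (rule integrable_mult_right[OF i2])
  have i3: "integrable \<mu> (\<lambda>z. Re (cnj c * (indicator S z *\<^sub>R z)))"
    by (rule integrable_Re[OF i2'])
  have pw: "indicator S z * (cmod (z - c))\<^sup>2
      = indicator S z * (cmod z)\<^sup>2 - 2 * Re (cnj c * (indicator S z *\<^sub>R z)) + (cmod c)\<^sup>2 * indicator S z" for z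
    by (simp add: norm_diff_square indicator_def)
  have "(LINT z|\<mu>. indicator S z * (cmod (z - c))\<^sup>2)
      = (LINT z|\<mu>. indicator S z * (cmod z)\<^sup>2 - 2 * Re (cnj c * (indicator S z *\<^sub>R z)) + (cmod c)\<^sup>2 * indicator S z)"
    by (simp only: pw)
  also have "\<dots> = (LINT z|\<mu>. indicator S z * (cmod z)\<^sup>2) - 2 * (LINT z|\<mu>. Re (cnj c * (indicator S z *\<^sub>R z)))
      + (cmod c)\<^sup>2 * (LINT z|\<mu>. indicator S z)"
    using i1 i3 S by (simp add: Bochner_Integration.integral_add Bochner_Integration.integral_diff)
  also have "(LINT z|\<mu>. Re (cnj c * (indicator S z *\<^sub>R z))) = Re (cnj c * moment S)"
  proof -
    have "(LINT z|\<mu>. Re (cnj c * (indicator S z *\<^sub>R z))) = Re (LINT z|\<mu>. cnj c * (indicator S z *\<^sub>R z))"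
      by (rule integral_bounded_linear[OF bounded_linear_Re i2'])
    also have "\<dots> = Re (cnj c * moment S)" unfolding moment_def by (simp only: integral_mult_right_zero)
    finally show ?thesis .
  qed
  also have "(LINT z|\<mu>. indicator S z) = measure \<mu> S" using S by (simp add: sets_eq_borel)
  finally show ?thesis .
qed

lemma cell_error_ge_gain:
  assumes S: "S \<in> sets borel"
  shows "(LINT z|\<mu>. indicator S z * (cmod z)\<^sup>2) - (cmod (moment S))\<^sup>2 / measure \<mu> S
       \<le> (LINT z|\<mu>. indicator S z * (cmod (z - c))\<^sup>2)"
proof (cases "measure \<mu> S = 0")
  case True
  then show ?thesis using cell_error_expand[OF S, of c] moment_null[OF S] by simp
next
  case False
  define m where "m = measure \<mu> S"
  define G where "G = moment S"
  have m0: "m > 0" using False by (simp add: m_def zero_less_measure_iff)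
  have "0 \<le> (cmod (of_real m * c - G))\<^sup>2 / m" using m0 by simp
  also have "(cmod (of_real m * c - G))\<^sup>2 = m\<^sup>2 * (cmod c)\<^sup>2 - 2 * m * Re (cnj c * G) + (cmod G)\<^sup>2"
    unfolding cmod_power2 by (simp add: algebra_simps power2_eq_square)
  finally have "0 \<le> (m\<^sup>2 * (cmod c)\<^sup>2 - 2 * m * Re (cnj c * G) + (cmod G)\<^sup>2) / m" .
  then have "0 \<le> m * (cmod c)\<^sup>2 - 2 * Re (cnj c * G) + (cmod G)\<^sup>2 / m"
    using m0 by (simp add: add_divide_distrib diff_divide_distrib power2_eq_square)
  then show ?thesis using cell_error_expand[OF S, of c] by (simp add: m_def G_def algebra_simps)
qed

lemma cell_error_mean:
  assumes S: "S \<in> sets borel"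
  shows "(LINT z|\<mu>. indicator S z * (cmod (z - moment S / of_real (measure \<mu> S)))\<^sup>2)
       = (LINT z|\<mu>. indicator S z * (cmod z)\<^sup>2) - (cmod (moment S))\<^sup>2 / measure \<mu> S"
proof (cases "measure \<mu> S = 0")
  case True
  then show ?thesis using cell_error_expand[OF S, of 0] moment_null[OF S] by simp
next
  case False
  define m where "m = measure \<mu> S"
  define G where "G = moment S"
  have m0: "m > 0" using False by (simp add: m_def zero_less_measure_iff)
  have a: "Re (cnj (G / of_real m) * G) = (cmod G)\<^sup>2 / m"
    unfolding cmod_power2 by (simp add: power2_eq_square add_divide_distrib)
  have b: "(cmod (G / of_real m))\<^sup>2 * m = (cmod G)\<^sup>2 / m"
    using m0 by (simp add: norm_divide power2_eq_square field_simps)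
  have e: "(LINT z|\<mu>. indicator S z * (cmod (z - G / of_real m))\<^sup>2)
      = (LINT z|\<mu>. indicator S z * (cmod z)\<^sup>2) - 2 * Re (cnj (G / of_real m) * G) + (cmod (G / of_real m))\<^sup>2 * m"
    using cell_error_expand[OF S, of "G / of_real m"] unfolding m_def G_def .
  show ?thesis using e a b unfolding m_def G_def by linarith
qed

lemma integral_ae_partition:
  fixes f :: "complex \<Rightarrow> real"
  assumes P: "ae_partition \<mu> I S" and f: "integrable \<mu> f"
  shows "integral\<^sup>L \<mu> f = (\<Sum>i\<in>I. LINT z|\<mu>. indicator (S i) z * f z)"
proof -
  have I: "finite I" and S: "\<And>i. i \<in> I \<Longrightarrow> S i \<in> sets borel" and dj: "disjoint_family_on S I"
    and cover: "AE z in \<mu>. z \<in> (\<Union>i\<in>I. S i)"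
    using P by (auto simp: ae_partition_def sets_eq_borel)
  from cover have "AE z in \<mu>. f z = (\<Sum>i\<in>I. indicator (S i) z * f z)"
    by eventually_elim (simp add: sum_distrib_right[symmetric] indicator_UN_disjoint[OF I dj, symmetric])
  then have "integral\<^sup>L \<mu> f = (LINT z|\<mu>. (\<Sum>i\<in>I. indicator (S i) z * f z))"
    using f S by (intro integral_cong_AE) (auto simp: sets_eq_borel)
  also have "\<dots> = (\<Sum>i\<in>I. LINT z|\<mu>. indicator (S i) z * f z)"
    using f S by (intro Bochner_Integration.integral_sum)
       (auto simp: mult.commute[of "indicator _ _"] sets_eq_borel intro!: integrable_real_mult_indicator)
  finally show ?thesis .
qed

text \<open>\<open>E|h|\<^sup>2\<close> minus the total gain of the cells is the error of the estimator that takes the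
  value \<open>moment S / measure \<mu> S\<close> on each cell \<open>S\<close>.\<close>

definition gain :: "complex set \<Rightarrow> real" where
  "gain S = (cmod (moment S))\<^sup>2 / measure \<mu> S"

lemma integral_norm_diff_ae_partition:
  assumes P: "ae_partition \<mu> I S"
    and integrable: "integrable \<mu> (\<lambda>z. (cmod (z - g z))\<^sup>2)"
    and const: "\<And>i z. i \<in> I \<Longrightarrow> z \<in> S i \<Longrightarrow> g z = c i"
  shows "(LINT z|\<mu>. (cmod (z - g z))\<^sup>2) = (\<Sum>i\<in>I. LINT z|\<mu>. indicator (S i) z * (cmod (z - c i))\<^sup>2)"
  unfolding integral_ae_partition[OF P integrable]
  using const by (intro sum.cong refl Bochner_Integration.integral_cong) (auto simp: indicator_def)

lemma integral_norm_square_ae_partition: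
  assumes "ae_partition \<mu> I S"
  shows "(LINT z|\<mu>. (cmod z)\<^sup>2) - (\<Sum>i\<in>I. gain (S i))
       = (\<Sum>i\<in>I. (LINT z|\<mu>. indicator (S i) z * (cmod z)\<^sup>2) - gain (S i))"
  using integral_ae_partition[OF assms integrable_norm_square] by (simp add: sum_subtractf)

lemma integral_norm_diff_ge_ae_partition:
  assumes P: "ae_partition \<mu> I S"
    and integrable: "integrable \<mu> (\<lambda>z. (cmod (z - g z))\<^sup>2)"
    and const: "\<And>i z. i \<in> I \<Longrightarrow> z \<in> S i \<Longrightarrow> g z = c i"
  shows "(LINT z|\<mu>. (cmod z)\<^sup>2) - (\<Sum>i\<in>I. gain (S i)) \<le> (LINT z|\<mu>. (cmod (z - g z))\<^sup>2)"
proof -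
  have "(LINT z|\<mu>. (cmod z)\<^sup>2) - (\<Sum>i\<in>I. gain (S i))
      = (\<Sum>i\<in>I. (LINT z|\<mu>. indicator (S i) z * (cmod z)\<^sup>2) - gain (S i))"
    by (rule integral_norm_square_ae_partition[OF P])
  also have "\<dots> \<le> (\<Sum>i\<in>I. LINT z|\<mu>. indicator (S i) z * (cmod (z - c i))\<^sup>2)"
    using P unfolding gain_def ae_partition_def by (intro sum_mono cell_error_ge_gain) (auto simp: sets_eq_borel)
  also have "\<dots> = (LINT z|\<mu>. (cmod (z - g z))\<^sup>2)"
    by (rule integral_norm_diff_ae_partition[OF P integrable const, symmetric])
  finally show ?thesis .
qed

lemma integral_norm_diff_eq_ae_partition:
  assumes P: "ae_partition \<mu> I S"
    and integrable: "integrable \<mu> (\<lambda>z. (cmod (z - g z))\<^sup>2)"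
    and cell_mean: "\<And>i z. i \<in> I \<Longrightarrow> z \<in> S i \<Longrightarrow> g z = moment (S i) / of_real (measure \<mu> (S i))"
  shows "(LINT z|\<mu>. (cmod (z - g z))\<^sup>2) = (LINT z|\<mu>. (cmod z)\<^sup>2) - (\<Sum>i\<in>I. gain (S i))"
proof -
  have "(LINT z|\<mu>. (cmod (z - g z))\<^sup>2)
      = (\<Sum>i\<in>I. LINT z|\<mu>. indicator (S i) z * (cmod (z - moment (S i) / of_real (measure \<mu> (S i))))\<^sup>2)"
    by (rule integral_norm_diff_ae_partition[OF P integrable cell_mean])
  also have "\<dots> = (\<Sum>i\<in>I. (LINT z|\<mu>. indicator (S i) z * (cmod z)\<^sup>2) - gain (S i))"
    using P unfolding gain_def ae_partition_def by (intro sum.cong refl cell_error_mean) (auto simp: sets_eq_borel)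
  also have "\<dots> = (LINT z|\<mu>. (cmod z)\<^sup>2) - (\<Sum>i\<in>I. gain (S i))"
    by (rule integral_norm_square_ae_partition[OF P, symmetric])
  finally show ?thesis .
qed

end

section \<open>Concavity of \<open>psi\<close>\<close>

definition psi :: "real \<Rightarrow> real" where "psi x = (1 - cos x) / x"
definition psi1 :: "real \<Rightarrow> real" where "psi1 x = (x * sin x - 1 + cos x) / x\<^sup>2"
definition psi2 :: "real \<Rightarrow> real" where "psi2 x = (x\<^sup>2 * cos x - 2 * x * sin x + 2 - 2 * cos x) / x ^ 3"

lemma psi_deriv: "x \<noteq> 0 \<Longrightarrow> (psi has_real_derivative psi1 x) (at x)"
  unfolding psi_def[abs_def] psi1_def
  by (rule derivative_eq_intros refl | simp)+ (simp add: field_simps power2_eq_square)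

lemma psi1_deriv: "x \<noteq> 0 \<Longrightarrow> (psi1 has_real_derivative psi2 x) (at x)"
  unfolding psi1_def[abs_def] psi2_def
  by (rule derivative_eq_intros refl | simp)+ (simp add: field_simps eval_nat_numeral algebra_simps)

lemma psi2_numerator_nonpos:
  assumes "0 \<le> x" "x \<le> pi"
  shows "x\<^sup>2 * cos x - 2 * x * sin x + 2 - 2 * cos x \<le> 0"
proof -
  let ?g = "\<lambda>x. - (x\<^sup>2 * cos x - 2 * x * sin x + 2 - 2 * cos x)"
  have "?g 0 \<le> ?g x"
  proof (rule DERIV_nonneg_imp_nondecreasing[OF assms(1)])
    fix t assume t: "0 \<le> t" "t \<le> x"
    have "(?g has_real_derivative t\<^sup>2 * sin t) (at t)"
      by (rule derivative_eq_intros refl | simp add: field_simps power2_eq_square)+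
    moreover have "t\<^sup>2 * sin t \<ge> 0" using t assms by (intro mult_nonneg_nonneg sin_ge_zero) auto
    ultimately show "\<exists>y. (?g has_real_derivative y) (at t) \<and> 0 \<le> y" by blast
  qed
  then show ?thesis by simp
qed

lemma psi2_nonpos: "0 < x \<Longrightarrow> x \<le> pi \<Longrightarrow> psi2 x \<le> 0"
  unfolding psi2_def using psi2_numerator_nonpos[of x] by (intro divide_nonpos_pos) auto

lemma psi_le_tangent:
  assumes "0 < x" "x < pi" "0 < y" "y < pi"
  shows "psi y \<le> psi x + psi1 x * (y - x)"
proof -
  have "(- psi1 x) * (y - x) \<le> (- psi y) - (- psi x)"
  proof (rule f''_imp_f'[where C="{0<..<pi}" and f="\<lambda>x. - psi x" and f'="\<lambda>x. - psi1 x" and f''="\<lambda>x. - psi2 x"])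
    show "convex {0<..<pi}" by simp
    show "((\<lambda>x. - psi x) has_real_derivative - psi1 t) (at t)" if "t \<in> {0<..<pi}" for t
      using that by (auto intro!: derivative_eq_intros psi_deriv)
    show "((\<lambda>x. - psi1 x) has_real_derivative - psi2 t) (at t)" if "t \<in> {0<..<pi}" for t
      using that by (auto intro!: derivative_eq_intros psi1_deriv)
    show "0 \<le> - psi2 t" if "t \<in> {0<..<pi}" for t
      using that psi2_nonpos[of t] by auto
  qed (use assms in auto)
  then show ?thesis by (simp add: algebra_simps)
qed

lemma psi_intercept_numerator_nonneg:
  assumes "0 \<le> x" "x \<le> pi"
  shows "0 \<le> 2 - 2 * cos x - x * sin x"
proof -
  have j: "0 \<le> sin t - t * cos t" if "0 \<le> t" "t \<le> pi" for t
  proof -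
    let ?j = "\<lambda>t. sin t - t * cos t"
    have "?j 0 \<le> ?j t"
    proof (rule DERIV_nonneg_imp_nondecreasing[OF that(1)])
      fix u assume u: "0 \<le> u" "u \<le> t"
      have "(?j has_real_derivative u * sin u) (at u)"
        by (rule derivative_eq_intros refl | simp)+
      moreover have "u * sin u \<ge> 0" using u that by (intro mult_nonneg_nonneg sin_ge_zero) auto
      ultimately show "\<exists>y. (?j has_real_derivative y) (at u) \<and> 0 \<le> y" by blast
    qed
    then show ?thesis by simp
  qed
  let ?k = "\<lambda>x. 2 - 2 * cos x - x * sin x"
  have "?k 0 \<le> ?k x"
  proof (rule DERIV_nonneg_imp_nondecreasing[OF assms(1)])
    fix u assume u: "0 \<le> u" "u \<le> x"
    have "(?k has_real_derivative sin u - u * cos u) (at u)"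
      by (rule derivative_eq_intros refl | simp add: algebra_simps)+
    then show "\<exists>y. (?k has_real_derivative y) (at u) \<and> 0 \<le> y" using j[of u] u assms by auto
  qed
  then show ?thesis by simp
qed

lemma psi_tangent_intercept_nonneg: "0 < x \<Longrightarrow> x \<le> pi \<Longrightarrow> 0 \<le> psi x - x * psi1 x"
proof -
  assume x: "0 < x" "x \<le> pi"
  have "psi x - x * psi1 x = (2 - 2 * cos x - x * sin x) / x"
    using x by (simp add: psi_def psi1_def field_simps power2_eq_square)
  then show ?thesis using psi_intercept_numerator_nonneg[of x] x by simp
qed

text \<open>Tangent line at \<open>x0\<close>; its nonnegative intercept absorbs the case \<open>card I < n\<close>.\<close>

lemma sum_psi_le:
  fixes w :: "'i \<Rightarrow> real"
  assumes I: "finite I" and cI: "real (card I) \<le> n"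
    and w: "\<And>i. i \<in> I \<Longrightarrow> 0 < w i \<and> w i \<le> pi / 2"
    and sw: "(\<Sum>i\<in>I. w i) = 2 * pi"
    and x0: "0 < x0" "x0 \<le> pi / 2" "n * x0 = 2 * pi"
  shows "(\<Sum>i\<in>I. psi (w i)) \<le> n * psi x0"
proof -
  have "(\<Sum>i\<in>I. psi (w i)) \<le> (\<Sum>i\<in>I. psi x0 + psi1 x0 * (w i - x0))"
  proof (intro sum_mono psi_le_tangent)
    fix i assume "i \<in> I"
    then show "0 < w i" "w i < pi" using w[of i] pi_gt_zero by linarith+
  qed (use x0 pi_gt_zero in linarith)+
  also have "\<dots> = real (card I) * psi x0 + psi1 x0 * (2 * pi) - real (card I) * x0 * psi1 x0"
    by (simp add: sum.distrib sum_subtractf sum_distrib_left[symmetric] sw algebra_simps)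
  also have "\<dots> = real (card I) * (psi x0 - x0 * psi1 x0) + psi1 x0 * (2 * pi)"
    by (simp add: algebra_simps)
  also have "\<dots> \<le> n * (psi x0 - x0 * psi1 x0) + psi1 x0 * (2 * pi)"
    using cI psi_tangent_intercept_nonneg[of x0] x0 by (intro add_right_mono mult_right_mono) auto
  also have "\<dots> = n * psi x0"
    using x0(3) by (simp add: algebra_simps)
  finally show ?thesis .
qed

section \<open>Gain of a sector\<close>

lemma norm_1_minus_cis_square: "(cmod (1 - cis w))\<^sup>2 = 2 - 2 * cos w"
proof -
  have "(cmod (1 - cis w))\<^sup>2 = (1 - cos w)\<^sup>2 + (sin w)\<^sup>2" by (simp add: cmod_power2)
  also have "\<dots> = 2 - 2 * cos w" using sin_cos_squared_add[of w] by (simp add: power2_eq_square algebra_simps)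
  finally show ?thesis .
qed

context rotation_invariant_measure
begin

definition gain_const :: real where "gain_const = pi * (cmod (sector_moment (pi/2)))\<^sup>2 / (2 * sector_measure (pi/2))"

lemma gain_const_nonneg: "gain_const \<ge> 0"
  unfolding gain_const_def using sector_measure_nonneg[of "pi/2"] by simp

lemma gain_sector:
  assumes w: "0 < w" "w \<le> pi / 2"
  shows "gain (sector \<alpha> (\<alpha> + w)) = gain_const * psi w"
proof -
  have g: "(cmod (sector_moment w))\<^sup>2 = (cmod (sector_moment (pi/2)))\<^sup>2 * (1 - cos w)"
  proof -
    have "(cmod (sector_moment w * (1 - \<i>)))\<^sup>2 = (cmod (sector_moment (pi/2) * (1 - cis w)))\<^sup>2" using sector_moment_eq[OF w] by simp
    then have "(cmod (sector_moment w))\<^sup>2 * (cmod (1 - \<i>))\<^sup>2 = (cmod (sector_moment (pi/2)))\<^sup>2 * (cmod (1 - cis w))\<^sup>2"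
      by (simp only: norm_mult power_mult_distrib)
    moreover have "(cmod (1 - \<i>))\<^sup>2 = 2" by (simp add: cmod_power2)
    ultimately show ?thesis by (simp add: norm_1_minus_cis_square algebra_simps)
  qed
  have "gain (sector \<alpha> (\<alpha> + w)) = (cmod (sector_moment w))\<^sup>2 / sector_measure w"
    by (simp add: gain_def moment_sector_eq measure_sector_eq norm_mult)
  also have "\<dots> = (cmod (sector_moment (pi/2)))\<^sup>2 * (1 - cos w) / ((2 * w / pi) * sector_measure (pi/2))"
    using g sector_measure_linear[OF w] by simp
  also have "\<dots> = gain_const * psi w"
    using w pi_gt_zero by (simp add: gain_const_def psi_def field_simps)
  finally show ?thesis .
qed

end

section \<open>Critical angles of a pilot\<close>

definition quantizer_values :: "complex set" where
  "quantizer_values = (\<lambda>(x, y). (complex_of_real x + \<i> * complex_of_real y) / complex_of_real (sqrt 2)) ` ({-1, 0, 1} \<times> {-1, 0, 1})"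

lemma finite_quantizer_values: "finite quantizer_values" by (simp add: quantizer_values_def)

lemma Qsign_quantizer_values: "Qsign z \<in> quantizer_values"
proof -
  have "sgn (Re z) \<in> {-1, 0, 1}" "sgn (Im z) \<in> {-1, 0, 1}"
    by (auto simp: sgn_real_def)
  then show ?thesis unfolding quantizer_values_def Qsign_def by force
qed

lemma obs_range: "range (obs M a) \<subseteq> {f. \<forall>x. (x \<in> {..<M} \<longrightarrow> f x \<in> quantizer_values) \<and> (x \<notin> {..<M} \<longrightarrow> f x = 0)}"
  by (auto simp: obs_def Qsign_quantizer_values)

lemma finite_obs_range: "finite (range (obs M a))"
  by (rule finite_subset[OF obs_range finite_set_of_finite_funs]) (simp_all add: finite_quantizer_values)

lemma Qsign_measurable[measurable]: "Qsign \<in> borel_measurable borel"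
  unfolding Qsign_def by measurable

lemma obs_level_set_borel: "{z. obs M a z = v} \<in> sets borel"
proof -
  have "{z. obs M a z = v} = (\<Inter>m. {z. obs M a z m = v m})"
    by (auto simp: fun_eq_iff)
  also have "\<dots> \<in> sets borel"
    unfolding obs_def by measurable
  finally show ?thesis .
qed

lemma measurable_compose_obs:
  assumes "\<And>v. (\<lambda>z. F v z) \<in> borel_measurable borel"
  shows "(\<lambda>z. F (obs M a z) z) \<in> borel_measurable borel"
proof (rule measurable_compose_countable'[where I="range (obs M a)"])
  show "(\<lambda>z. F v z) \<in> borel_measurable borel" for v by (rule assms)
  show "obs M a \<in> borel \<rightarrow>\<^sub>M count_space (range (obs M a))"
  proof (subst measurable_count_space_eq2[OF finite_obs_range], safe)
    fix z show "obs M a z \<in> range (obs M a)" by simp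
  next
    fix z
    have "obs M a -` {obs M a z} = {y. obs M a y = obs M a z}" by auto
    then show "obs M a -` {obs M a z} \<inter> space borel \<in> sets borel" using obs_level_set_borel by simp
  qed
  show "countable (range (obs M a))" using finite_obs_range by (rule countable_finite)
qed

text \<open>The angles \<open>\<theta>\<close> at which some nonzero \<open>a m * cis \<theta>\<close> lies on a coordinate axis.\<close>

definition crit_angles :: "nat \<Rightarrow> (nat \<Rightarrow> complex) \<Rightarrow> real set" where
  "crit_angles M a = {of_int k * (pi/2) - Arg (a m) | k m. m < M \<and> a m \<noteq> 0}"

lemma crit_angles_add: "c \<in> crit_angles M a \<Longrightarrow> c + of_int j * (pi/2) \<in> crit_angles M a"
proof -
  assume "c \<in> crit_angles M a"
  then obtain k m where km: "c = of_int k * (pi/2) - Arg (a m)" "m < M" "a m \<noteq> 0"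
    by (auto simp: crit_angles_def)
  show ?thesis unfolding crit_angles_def
    by (intro CollectI exI[of _ "k + j"] exI[of _ m]) (simp add: km algebra_simps)
qed

lemma crit_angles_add_pi_half: "c \<in> crit_angles M a \<Longrightarrow> c + pi/2 \<in> crit_angles M a"
  using crit_angles_add[of c M a 1] by simp

lemma crit_angles_add_2pi: "c \<in> crit_angles M a \<Longrightarrow> c + 2 * pi \<in> crit_angles M a"
  using crit_angles_add[of c M a 4] by simp

lemma finite_crit_angles_Icc: "finite (crit_angles M a \<inter> {x..y})"
proof -
  let ?f = "\<lambda>(k::int, m::nat). of_int k * (pi/2) - Arg (a m)"
  have "crit_angles M a \<inter> {x..y} \<subseteq> ?f ` ({\<lfloor>2 * (x - pi) / pi\<rfloor>..\<lceil>2 * (y + pi) / pi\<rceil>} \<times> {..<M})"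
  proof
    fix t assume "t \<in> crit_angles M a \<inter> {x..y}"
    then obtain k m where t: "t = of_int k * (pi/2) - Arg (a m)" "m < M" "x \<le> t" "t \<le> y"
      by (auto simp: crit_angles_def)
    have A: "- pi < Arg (a m)" "Arg (a m) \<le> pi" using Arg_bounded by auto
    have "2 * (x - pi) / pi < of_int k"
      using t A pi_gt_zero by (simp add: field_simps)
    then have k1: "\<lfloor>2 * (x - pi) / pi\<rfloor> \<le> k" by (simp add: floor_le_iff)
    have "of_int k \<le> 2 * (y + pi) / pi"
      using t A pi_gt_zero by (simp add: field_simps)
    then have k2: "k \<le> \<lceil>2 * (y + pi) / pi\<rceil>" by (simp add: le_ceiling_iff)
    show "t \<in> ?f ` ({\<lfloor>2 * (x - pi) / pi\<rfloor>..\<lceil>2 * (y + pi) / pi\<rceil>} \<times> {..<M})"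
      using k1 k2 t by (intro image_eqI[of _ _ "(k, m)"]) auto
  qed
  then show ?thesis by (rule finite_subset) auto
qed

text \<open>For critical \<open>c\<close> the minimum is over a nonempty set, as \<open>c + pi/2\<close> is again critical.\<close>

definition next_crit :: "nat \<Rightarrow> (nat \<Rightarrow> complex) \<Rightarrow> real \<Rightarrow> real" where
  "next_crit M a c = Min (crit_angles M a \<inter> {c<..c + pi/2})"

abbreviation crit_arc :: "nat \<Rightarrow> (nat \<Rightarrow> complex) \<Rightarrow> real \<Rightarrow> complex set" where
  "crit_arc M a c \<equiv> sector c (next_crit M a c)"

lemma next_crit_spec:
  assumes "c \<in> crit_angles M a"
  shows "next_crit M a c \<in> crit_angles M a" "c < next_crit M a c" "next_crit M a c \<le> c + pi/2"
    and "\<And>t. t \<in> crit_angles M a \<Longrightarrow> c < t \<Longrightarrow> next_crit M a c \<le> t"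
proof -
  let ?X = "crit_angles M a \<inter> {c<..c + pi/2}"
  have fin: "finite ?X"
    by (rule finite_subset[OF _ finite_crit_angles_Icc[of M a c "c + pi/2"]]) auto
  have mem: "c + pi/2 \<in> ?X" using crit_angles_add_pi_half[OF assms] by simp
  then have ne: "?X \<noteq> {}" by auto
  have "next_crit M a c \<in> ?X" unfolding next_crit_def using Min_in[OF fin ne] .
  then show "next_crit M a c \<in> crit_angles M a" "c < next_crit M a c" "next_crit M a c \<le> c + pi/2" by auto
  fix t assume t: "t \<in> crit_angles M a" "c < t"
  show "next_crit M a c \<le> t"
  proof (cases "t \<le> c + pi/2")
    case True
    then have "t \<in> ?X" using t by simp
    then show ?thesis unfolding next_crit_def using Min_le[OF fin] by blast
  next
    case False
    then show ?thesis using \<open>next_crit M a c \<in> ?X\<close> by simp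
  qed
qed

lemma polar_Arg: "z \<noteq> 0 \<Longrightarrow> z = complex_of_real (cmod z) * cis (Arg z)"
  by (simp add: cis_Arg sgn_div_norm scaleR_conv_of_real field_simps)

lemma crit_anglesI:
  assumes "m < M" "a m \<noteq> 0" "Re (a m * cis \<theta>) = 0 \<or> Im (a m * cis \<theta>) = 0"
  shows "\<theta> \<in> crit_angles M a"
proof -
  define A where "A = Arg (a m)"
  have "a m * cis \<theta> = complex_of_real (cmod (a m)) * cis (A + \<theta>)"
    using polar_Arg[OF assms(2)] by (simp add: A_def mult.assoc cis_mult[symmetric])
  then have re: "Re (a m * cis \<theta>) = cmod (a m) * cos (A + \<theta>)"
    and im: "Im (a m * cis \<theta>) = cmod (a m) * sin (A + \<theta>)" by simp_all
  have n0: "cmod (a m) \<noteq> 0" using assms(2) by simp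
  show ?thesis
  proof (cases "Re (a m * cis \<theta>) = 0")
    case True
    then have "cos (A + \<theta>) = 0" using re n0 by simp
    then obtain i :: int where "A + \<theta> = of_int i * pi + pi / 2" by (auto simp: cos_zero_iff_int2)
    then have "\<theta> = of_int (2 * i + 1) * (pi / 2) - A" by (simp add: algebra_simps)
    then show ?thesis using assms unfolding crit_angles_def A_def by blast
  next
    case False
    then have "Im (a m * cis \<theta>) = 0" using assms(3) by simp
    then have "sin (A + \<theta>) = 0" using im n0 by simp
    then obtain i :: int where "A + \<theta> = of_int i * pi" by (auto simp: sin_zero_iff_int2)
    then have "\<theta> = of_int (2 * i) * (pi / 2) - A" by (simp add: algebra_simps)
    then show ?thesis using assms unfolding crit_angles_def A_def by blast
  qed
qed

lemma sgn_eq_if_no_zero: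
  fixes f :: "real \<Rightarrow> real"
  assumes "x \<le> y" "continuous_on {x..y} f" "\<And>t. t \<in> {x..y} \<Longrightarrow> f t \<noteq> 0"
  shows "sgn (f x) = sgn (f y)"
proof (rule ccontr)
  assume ne: "sgn (f x) \<noteq> sgn (f y)"
  have fx: "f x \<noteq> 0" "f y \<noteq> 0" using assms by auto
  show False
  proof (cases "f x < 0")
    case True
    then have "f y > 0" using ne fx by (auto simp: sgn_real_def split: if_splits)
    then obtain t where "t \<ge> x" "t \<le> y" "f t = 0"
      using IVT'[of f x 0 y] True assms by auto
    then show False using assms(3) by auto
  next
    case False
    then have "f x > 0" "f y < 0" using ne fx by (auto simp: sgn_real_def split: if_splits)
    then obtain t where "t \<ge> x" "t \<le> y" "f t = 0"
      using IVT2'[of f y 0 x] assms by auto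
    then show False using assms(3) by auto
  qed
qed

lemma sgn_Re_Im_eq_on_arc:
  assumes c: "c \<in> crit_angles M a"
    and \<theta>: "c < \<theta>1" "\<theta>1 < next_crit M a c" "c < \<theta>2" "\<theta>2 < next_crit M a c"
    and m: "m < M"
  shows "sgn (Re (a m * cis \<theta>1)) = sgn (Re (a m * cis \<theta>2)) \<and>
         sgn (Im (a m * cis \<theta>1)) = sgn (Im (a m * cis \<theta>2))"
proof -
  have "sgn (Re (a m * cis \<theta>)) = sgn (Re (a m * cis \<theta>')) \<and>
      sgn (Im (a m * cis \<theta>)) = sgn (Im (a m * cis \<theta>'))"
    if "c < \<theta>" "\<theta> \<le> \<theta>'" "\<theta>' < next_crit M a c" "a m \<noteq> 0" for \<theta> \<theta>'
  proof -
    have "Re (a m * cis t) \<noteq> 0 \<and> Im (a m * cis t) \<noteq> 0" if t: "t \<in> {\<theta>..\<theta>'}" for t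
    proof (rule ccontr)
      assume "\<not> (Re (a m * cis t) \<noteq> 0 \<and> Im (a m * cis t) \<noteq> 0)"
      then have "t \<in> crit_angles M a" using crit_anglesI[of m M a t] m \<open>a m \<noteq> 0\<close> by blast
      then have "next_crit M a c \<le> t" using next_crit_spec(4)[OF c] t \<open>c < \<theta>\<close> by auto
      then show False using t \<open>\<theta>' < next_crit M a c\<close> by auto
    qed
    moreover have "continuous_on {\<theta>..\<theta>'} (\<lambda>t. Re (a m * cis t))" "continuous_on {\<theta>..\<theta>'} (\<lambda>t. Im (a m * cis t))"
      by (intro continuous_intros)+
    ultimately show ?thesis
      using sgn_eq_if_no_zero[OF \<open>\<theta> \<le> \<theta>'\<close>] by blast
  qed
  then show ?thesis
    using \<theta> by (cases "a m = 0"; cases "\<theta>1 \<le> \<theta>2") (simp_all, metis linorder_not_le less_imp_le)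
qed

lemma Qsign_scaleR_pos: "r > 0 \<Longrightarrow> Qsign (complex_of_real r * w) = Qsign w"
  by (simp add: Qsign_def sgn_mult)

lemma obs_eq_on_crit_arc:
  assumes c: "c \<in> crit_angles M a" and z1: "z1 \<in> crit_arc M a c" and z2: "z2 \<in> crit_arc M a c"
  shows "obs M a z1 = obs M a z2"
proof -
  have w: "c < next_crit M a c" "next_crit M a c - c \<le> pi" using next_crit_spec[OF c] pi_gt_zero by auto
  obtain \<theta>1 where \<theta>1: "c < \<theta>1" "\<theta>1 < next_crit M a c" and "cmod z1 > 0"
    and z1_polar: "z1 = complex_of_real (cmod z1) * cis \<theta>1"
    using sector_polarE[OF z1 w] by blast
  obtain \<theta>2 where \<theta>2: "c < \<theta>2" "\<theta>2 < next_crit M a c" and "cmod z2 > 0"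
    and z2_polar: "z2 = complex_of_real (cmod z2) * cis \<theta>2"
    using sector_polarE[OF z2 w] by blast
  have "Qsign (a m * z1) = Qsign (a m * z2)" if "m < M" for m
  proof -
    have "Qsign (a m * z1) = Qsign (a m * cis \<theta>1)"
      using Qsign_scaleR_pos[OF \<open>cmod z1 > 0\<close>, of "a m * cis \<theta>1"] by (subst z1_polar) (simp add: mult_ac)
    also have "\<dots> = Qsign (a m * cis \<theta>2)"
      using sgn_Re_Im_eq_on_arc[OF c \<theta>1 \<theta>2 that] by (simp add: Qsign_def)
    also have "\<dots> = Qsign (a m * z2)"
      using Qsign_scaleR_pos[OF \<open>cmod z2 > 0\<close>, of "a m * cis \<theta>2"] by (subst z2_polar) (simp add: mult_ac)
    finally show ?thesis .
  qed
  then show ?thesis by (auto simp: obs_def)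
qed

definition crit_window :: "nat \<Rightarrow> (nat \<Rightarrow> complex) \<Rightarrow> real \<Rightarrow> real set" where
  "crit_window M a t0 = crit_angles M a \<inter> {t0..<t0 + 2 * pi}"

lemma crit_arc_width:
  assumes "c \<in> crit_window M a t0"
  shows "0 < next_crit M a c - c" "next_crit M a c - c \<le> pi / 2"
  using next_crit_spec[of c M a] assms by (auto simp: crit_window_def)

lemma finite_crit_window: "finite (crit_window M a t0)"
  unfolding crit_window_def by (rule finite_subset[OF _ finite_crit_angles_Icc[of M a t0 "t0 + 2 * pi"]]) auto

lemma start_in_crit_window: "t0 \<in> crit_angles M a \<Longrightarrow> t0 \<in> crit_window M a t0"
  by (simp add: crit_window_def)

lemma card_crit_window_le: "card (crit_window M a t0) \<le> 4 * M"
proof -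
  define L where "L m = \<lceil>2 * (t0 + Arg (a m)) / pi\<rceil>" for m
  let ?B = "\<lambda>m. (\<lambda>k. of_int k * (pi/2) - Arg (a m)) ` {L m..L m + 3}"
  have sub: "crit_window M a t0 \<subseteq> (\<Union>m\<in>{..<M}. ?B m)"
  proof
    fix t assume "t \<in> crit_window M a t0"
    then obtain k m where t: "t = of_int k * (pi/2) - Arg (a m)" "m < M" "t0 \<le> t" "t < t0 + 2 * pi"
      by (auto simp: crit_window_def crit_angles_def)
    have "2 * (t0 + Arg (a m)) / pi \<le> of_int k"
      using t pi_gt_zero by (simp add: field_simps)
    then have k1: "L m \<le> k" by (simp add: L_def ceiling_le_iff)
    have "of_int k < 2 * (t0 + Arg (a m)) / pi + 4"
      using t pi_gt_zero by (simp add: field_simps)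
    moreover have "2 * (t0 + Arg (a m)) / pi \<le> of_int (L m)" unfolding L_def by (rule le_of_int_ceiling)
    ultimately have "(of_int k :: real) < of_int (L m + 4)" by simp
    then have k2: "k \<le> L m + 3" by linarith
    show "t \<in> (\<Union>m\<in>{..<M}. ?B m)" using t k1 k2 by (intro UN_I[of m] image_eqI[of _ _ k]) auto
  qed
  have "card (crit_window M a t0) \<le> card (\<Union>m\<in>{..<M}. ?B m)"
    by (rule card_mono[OF _ sub]) auto
  also have "\<dots> \<le> (\<Sum>m\<in>{..<M}. card (?B m))" by (rule card_UN_le) simp
  also have "\<dots> \<le> (\<Sum>m\<in>{..<M}. 4)"
  proof (rule sum_mono)
    fix m
    have "card (?B m) \<le> card {L m..L m + 3}" by (rule card_image_le) simp
    then show "card (?B m) \<le> 4" by simp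
  qed
  finally show ?thesis by simp
qed

lemma next_crit_le_window_end:
  assumes t0: "t0 \<in> crit_angles M a" and c: "c \<in> crit_window M a t0"
  shows "next_crit M a c \<le> t0 + 2 * pi"
  using c next_crit_spec(4)[of c M a "t0 + 2 * pi"] crit_angles_add_2pi[OF t0] by (auto simp: crit_window_def)

lemma cis_neq_within_period:
  assumes "\<theta>1 < \<theta>2" "\<theta>2 - \<theta>1 < 2 * pi"
  shows "cis \<theta>1 \<noteq> cis \<theta>2"
proof
  assume "cis \<theta>1 = cis \<theta>2"
  then have "cis (\<theta>2 - \<theta>1) = 1" by (simp add: cis_divide[symmetric])
  then have "cos (\<theta>2 - \<theta>1) = 1" by (metis Re_complex_of_real cis.sel(1) of_real_1)
  then obtain n :: int where n: "\<theta>2 - \<theta>1 = of_int n * (2 * pi)"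
    by (auto simp: cos_one_2pi_int mult.assoc)
  then have "0 < of_int n * (2 * pi)" "of_int n * (2 * pi) < 1 * (2 * pi)"
    using assms by linarith+
  then have "(0::real) < of_int n" "(of_int n :: real) < 1"
    by (simp_all add: zero_less_mult_iff mult_less_cancel_right)
  then show False by simp
qed

lemma crit_arcs_disjoint_less:
  assumes t0: "t0 \<in> crit_angles M a" and c1: "c1 \<in> crit_window M a t0" and c2: "c2 \<in> crit_window M a t0" and lt: "c1 < c2"
  shows "crit_arc M a c1 \<inter> crit_arc M a c2 = {}"
proof (rule ccontr)
  assume "\<not> ?thesis"
  then obtain z where z: "z \<in> crit_arc M a c1" "z \<in> crit_arc M a c2" by blast
  have cc1: "c1 \<in> crit_angles M a" and cc2: "c2 \<in> crit_angles M a" using c1 c2 by (auto simp: crit_window_def)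
  have w1: "c1 < next_crit M a c1" "next_crit M a c1 - c1 \<le> pi" using next_crit_spec[OF cc1] pi_gt_zero by auto
  have w2: "c2 < next_crit M a c2" "next_crit M a c2 - c2 \<le> pi" using next_crit_spec[OF cc2] pi_gt_zero by auto
  obtain \<theta>1 where t1: "c1 < \<theta>1" "\<theta>1 < next_crit M a c1" "z = complex_of_real (cmod z) * cis \<theta>1" "cmod z > 0"
    using sector_polarE[OF z(1) w1] by blast
  obtain \<theta>2 where t2: "c2 < \<theta>2" "\<theta>2 < next_crit M a c2" "z = complex_of_real (cmod z) * cis \<theta>2"
    using sector_polarE[OF z(2) w2] by blast
  have "next_crit M a c1 \<le> c2" using next_crit_spec(4)[OF cc1 cc2 lt] .
  moreover have "next_crit M a c2 \<le> t0 + 2 * pi" using next_crit_le_window_end[OF t0 c2] .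
  moreover have "t0 \<le> c1" using c1 by (simp add: crit_window_def)
  moreover have "cis \<theta>1 = cis \<theta>2"
    using t1(3) t2(3) t1(4) by (metis mult_cancel_left of_real_eq_0_iff less_irrefl)
  ultimately show False using cis_neq_within_period[of \<theta>1 \<theta>2] t1 t2 by fastforce
qed

lemma crit_arcs_disjoint:
  assumes t0: "t0 \<in> crit_angles M a" and c1: "c1 \<in> crit_window M a t0" and c2: "c2 \<in> crit_window M a t0" and ne: "c1 \<noteq> c2"
  shows "crit_arc M a c1 \<inter> crit_arc M a c2 = {}"
proof (cases "c1 < c2")
  case True then show ?thesis using crit_arcs_disjoint_less[OF t0 c1 c2] by simp
next
  case False
  then have "c2 < c1" using ne by simp
  then show ?thesis using crit_arcs_disjoint_less[OF t0 c2 c1] by blast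
qed

lemma crit_window_cover:
  assumes t0: "t0 \<in> crit_angles M a" and \<theta>: "t0 \<le> \<theta>" "\<theta> < t0 + 2 * pi" "\<theta> \<notin> crit_angles M a"
  obtains c where "c \<in> crit_window M a t0" "c < \<theta>" "\<theta> < next_crit M a c"
proof -
  define S where "S = crit_window M a t0 \<inter> {..\<theta>}"
  have S: "finite S" "S \<noteq> {}"
    using finite_crit_window start_in_crit_window[OF t0] \<theta> by (auto simp: S_def)
  define c where "c = Max S"
  have "c \<in> S" unfolding c_def using Max_in[OF S] .
  then have c: "c \<in> crit_window M a t0" "c \<le> \<theta>" "c \<in> crit_angles M a"
    by (auto simp: S_def crit_window_def)
  have "\<theta> < next_crit M a c"
  proof (rule ccontr)
    assume "\<not> \<theta> < next_crit M a c"
    then have "next_crit M a c \<in> S"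
      using next_crit_spec[OF c(3)] \<theta> c(1) by (auto simp: S_def crit_window_def)
    then have "next_crit M a c \<le> c" unfolding c_def using Max_ge[OF S(1)] by blast
    then show False using next_crit_spec(2)[OF c(3)] by simp
  qed
  moreover have "c < \<theta>" using c \<theta>(3) by (cases "c = \<theta>") auto
  ultimately show ?thesis using that c(1) by blast
qed

lemma crit_arcs_cover:
  assumes t0: "t0 \<in> crit_angles M a" and z: "z \<notin> (\<Union>c\<in>crit_window M a t0. angle_line c)"
  shows "\<exists>c\<in>crit_window M a t0. z \<in> crit_arc M a c"
proof -
  obtain \<theta> where \<theta>: "t0 \<le> \<theta>" "\<theta> < t0 + 2 * pi" and z_polar: "z = complex_of_real (cmod z) * cis \<theta>"
    using polar_form_in_window[of t0 z] by blast
  have "z \<in> angle_line \<theta>"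
    by (subst z_polar) (simp add: angle_line_def rot_Im_polar)
  then have "\<theta> \<notin> crit_angles M a"
    using z \<theta> by (auto simp: crit_window_def)
  then obtain c where c: "c \<in> crit_window M a t0" "c < \<theta>" "\<theta> < next_crit M a c"
    using crit_window_cover[OF t0 \<theta>] by blast
  have "z \<noteq> 0"
    using z start_in_crit_window[OF t0] by (auto simp: angle_line_def rot_Im_def)
  then have "complex_of_real (cmod z) * cis \<theta> \<in> crit_arc M a c"
    using next_crit_spec[of c M a] c by (intro polar_in_sector) (auto simp: crit_window_def)
  then show ?thesis using c(1) z_polar by auto
qed

section \<open>The equidistant pilot\<close>

lemma equi_pilot_eq_cis: "equi_pilot M m = cis (pi * real m / (2 * real M))"
  by (simp add: equi_pilot_def cis_conv_exp)

lemma equi_pilot_nonzero: "equi_pilot M m \<noteq> 0" by (simp add: equi_pilot_def)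

lemma Arg_equi_pilot:
  assumes "m < M"
  shows "Arg (equi_pilot M m) = pi * real m / (2 * real M)"
proof (rule Arg_unique[of 1])
  show "complex_of_real 1 * exp (\<i> * complex_of_real (pi * real m / (2 * real M))) = equi_pilot M m"
    by (simp add: equi_pilot_def)
  have "real m / real M < 1" using assms by simp
  then have "pi * real m / (2 * real M) \<le> pi / 2"
    using assms pi_gt_zero by (simp add: field_simps)
  then show "pi * real m / (2 * real M) \<le> pi" using pi_gt_zero by linarith
  have "0 \<le> pi * real m / (2 * real M)" by simp
  then show "- pi < pi * real m / (2 * real M)" using pi_gt_zero by linarith
qed simp

lemma crit_angles_equi:
  assumes M: "M \<ge> 1"
  shows "crit_angles M (equi_pilot M) = range (\<lambda>j::int. of_int j * (pi / (2 * real M)))"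
proof (intro set_eqI iffI)
  fix t assume "t \<in> crit_angles M (equi_pilot M)"
  then obtain k m where t: "t = of_int k * (pi/2) - Arg (equi_pilot M m)" "m < M"
    by (auto simp: crit_angles_def)
  then have "t = of_int (k * int M - int m) * (pi / (2 * real M))"
    using M by (simp add: Arg_equi_pilot field_simps)
  then show "t \<in> range (\<lambda>j::int. of_int j * (pi / (2 * real M)))" by blast
next
  fix t assume "t \<in> range (\<lambda>j::int. of_int j * (pi / (2 * real M)))"
  then obtain j :: int where t: "t = of_int j * (pi / (2 * real M))" by blast
  define m' where "m' = (- j) mod int M"
  define k where "k = (j + m') div int M"
  have m'0: "0 \<le> m'" "m' < int M" using M by (simp_all add: m'_def)
  have "(j + m') mod int M = 0" by (simp add: m'_def mod_add_right_eq)
  then have "int M dvd (j + m')" by (simp add: dvd_eq_mod_eq_0)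
  then have "k * int M = j + m'" unfolding k_def by (rule dvd_div_mult_self)
  then have jk: "j = k * int M - m'" by simp
  define m where "m = nat m'"
  have mM: "m < M" using m'0 by (simp add: m_def)
  have rm: "real m = of_int m'" using m'0 by (simp add: m_def)
  have "t = of_int k * (pi/2) - Arg (equi_pilot M m)"
    using M m'0 by (simp add: t jk Arg_equi_pilot[OF mM] rm field_simps)
  then show "t \<in> crit_angles M (equi_pilot M)"
    unfolding crit_angles_def using mM equi_pilot_nonzero by blast
qed

lemma next_crit_equi:
  assumes M: "M \<ge> 1"
  shows "next_crit M (equi_pilot M) (of_int j * (pi / (2 * real M))) = of_int (j + 1) * (pi / (2 * real M))"
proof -
  let ?d = "pi / (2 * real M)"
  have d0: "?d > 0" using M by simp
  have c: "of_int j * ?d \<in> crit_angles M (equi_pilot M)" using crit_angles_equi[OF M] by blast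
  have c1: "of_int (j + 1) * ?d \<in> crit_angles M (equi_pilot M)" using crit_angles_equi[OF M] by blast
  have lt: "of_int j * ?d < of_int (j + 1) * ?d" using d0 by (intro mult_strict_right_mono) auto
  have le: "next_crit M (equi_pilot M) (of_int j * ?d) \<le> of_int (j + 1) * ?d"
    using next_crit_spec(4)[OF c c1 lt] .
  have "next_crit M (equi_pilot M) (of_int j * ?d) \<in> crit_angles M (equi_pilot M)"
    and gt: "of_int j * ?d < next_crit M (equi_pilot M) (of_int j * ?d)" using next_crit_spec[OF c] by auto
  then obtain j' :: int where j': "next_crit M (equi_pilot M) (of_int j * ?d) = of_int j' * ?d"
    using crit_angles_equi[OF M] by auto
  from gt have "of_int j * ?d < of_int j' * ?d" unfolding j' .
  then have "(of_int j :: real) < of_int j'" by (rule mult_right_less_imp_less) (use d0 in simp)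
  then have "j < j'" by simp
  then have "of_int (j + 1) * ?d \<le> of_int j' * ?d" using d0 by (intro mult_right_mono) auto
  then show ?thesis using le j' by simp
qed

lemma crit_window_equi:
  assumes M: "M \<ge> 1"
  shows "crit_window M (equi_pilot M) 0 = (\<lambda>j. real j * (pi / (2 * real M))) ` {..<4 * M}"
proof (intro set_eqI iffI)
  let ?d = "pi / (2 * real M)"
  have d0: "?d > 0" using M by simp
  have d4: "real (4 * M) * ?d = 2 * pi" using M by (simp add: field_simps)
  fix t
  assume "t \<in> crit_window M (equi_pilot M) 0"
  then obtain j :: int where t: "t = of_int j * ?d" "0 \<le> t" "t < 2 * pi"
    using crit_angles_equi[OF M] by (auto simp: crit_window_def)
  have "0 \<le> j"
  proof (rule ccontr)
    assume "\<not> 0 \<le> j"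
    then have "of_int j * ?d < 0" using d0 by (intro mult_neg_pos) auto
    then show False using t by linarith
  qed
  moreover have "of_int j * ?d < real (4 * M) * ?d" using t(1,3) d4 by linarith
  then have "(of_int j :: real) < real (4 * M)" by (rule mult_right_less_imp_less) (use d0 in simp)
  then have "j < int (4 * M)" by simp
  ultimately show "t \<in> (\<lambda>j. real j * ?d) ` {..<4 * M}"
    using t by (intro image_eqI[of _ _ "nat j"]) auto
next
  let ?d = "pi / (2 * real M)"
  have d0: "?d > 0" using M by simp
  have d4: "real (4 * M) * ?d = 2 * pi" using M by (simp add: field_simps)
  fix t assume "t \<in> (\<lambda>j. real j * ?d) ` {..<4 * M}"
  then obtain j where j: "j < 4 * M" "t = real j * ?d" by auto
  have "t \<in> crit_angles M (equi_pilot M)" using crit_angles_equi[OF M] j by (auto intro!: image_eqI[of _ _ "int j"])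
  moreover have "real j * ?d < real (4 * M) * ?d" using j d0 by (intro mult_strict_right_mono) auto
  ultimately show "t \<in> crit_window M (equi_pilot M) 0" using j d4 by (simp add: crit_window_def)
qed

lemma card_crit_window_equi:
  assumes M: "M \<ge> 1"
  shows "card (crit_window M (equi_pilot M) 0) = 4 * M"
proof -
  have "inj_on (\<lambda>j. real j * (pi / (2 * real M))) {..<4 * M}"
    using M by (intro inj_onI) simp
  then show ?thesis unfolding crit_window_equi[OF M] by (simp add: card_image)
qed

text \<open>The value of Qsign on the open quadrant
  \<open>\<rho> * pi / 2 < arg z < (\<rho> + 1) * pi / 2\<close>, for \<open>\<rho> \<in> {0..3}\<close>.\<close>

definition quadrant_code :: "int \<Rightarrow> complex" where
  "quadrant_code \<rho> = (complex_of_real (if \<rho> = 0 \<or> \<rho> = 3 then 1 else -1)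
     + \<i> * complex_of_real (if \<rho> \<le> 1 then 1 else -1)) / complex_of_real (sqrt 2)"

lemma quadrant_code_inj:
  assumes "0 \<le> \<rho>" "\<rho> < 4" "0 \<le> \<rho>'" "\<rho>' < 4" "\<rho> \<noteq> \<rho>'"
  shows "quadrant_code \<rho> \<noteq> quadrant_code \<rho>'"
proof -
  have "\<rho> \<in> {0, 1, 2, 3}" "\<rho>' \<in> {0, 1, 2, 3}" using assms by auto
  then show ?thesis using assms(5) by (auto simp: quadrant_code_def complex_eq_iff)
qed

lemma Qsign_cis_quadrant:
  assumes \<rho>: "0 \<le> \<rho>" "\<rho> < 4" and \<phi>: "of_int \<rho> * (pi/2) < \<phi>" "\<phi> < of_int (\<rho> + 1) * (pi/2)"
  shows "Qsign (cis \<phi>) = quadrant_code \<rho>"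
proof -
  consider "\<rho> = 0" | "\<rho> = 1" | "\<rho> = 2" | "\<rho> = 3" using \<rho> by linarith
  then have "sgn (cos \<phi>) = (if \<rho> = 0 \<or> \<rho> = 3 then 1 else -1) \<and> sgn (sin \<phi>) = (if \<rho> \<le> 1 then 1 else -1)"
  proof cases
    case 1
    then have "0 < \<phi>" "\<phi> < pi/2" using \<phi> by simp_all
    then show ?thesis using 1 cos_gt_zero[of \<phi>] sin_gt_zero[of \<phi>] by simp
  next
    case 2
    then have "pi/2 < \<phi>" "\<phi> < pi" using \<phi> by simp_all
    then have "0 < sin (\<phi> - pi/2)" "0 < sin \<phi>" by (simp_all add: sin_gt_zero)
    then show ?thesis using 2 by (simp add: sin_diff)
  next
    case 3
    then have "pi < \<phi>" "\<phi> < 3 * pi / 2" using \<phi> by simp_all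
    then have "0 < sin (\<phi> - pi/2)" "sin \<phi> < 0" by (simp_all add: sin_gt_zero sin_lt_zero)
    then show ?thesis using 3 by (simp add: sin_diff)
  next
    case 4
    then have "3 * pi / 2 < \<phi>" "\<phi> < 2 * pi" using \<phi> by simp_all
    then have "0 < cos (2 * pi - \<phi>)" "sin \<phi> < 0" by (intro cos_gt_zero sin_lt_zero; simp)+
    then show ?thesis using 4 by (simp add: cos_diff)
  qed
  then show ?thesis by (simp add: Qsign_def quadrant_code_def)
qed

lemma Qsign_quadrant:
  assumes "r > 0" "of_int q * (pi/2) < \<phi>" "\<phi> < of_int (q + 1) * (pi/2)"
  shows "Qsign (complex_of_real r * cis \<phi>) = quadrant_code (q mod 4)"
proof -
  define \<phi>' where "\<phi>' = \<phi> - of_int (q div 4) * (2 * pi)"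
  have "cis \<phi> = cis \<phi>' * cis (2 * pi * of_int (q div 4))"
    by (simp add: cis_mult \<phi>'_def algebra_simps)
  also have "cis (2 * pi * of_int (q div 4)) = 1" by (rule cis_multiple_2pi) simp
  finally have "cis \<phi> = cis \<phi>'" by simp
  moreover have "of_int (q mod 4) * (pi/2) < \<phi>'" "\<phi>' < of_int (q mod 4 + 1) * (pi/2)"
  proof -
    have "real_of_int q = of_int (q mod 4) + 4 * of_int (q div 4)"
      by (metis add.commute div_mult_mod_eq mult.commute of_int_add of_int_mult of_int_numeral)
    then show "of_int (q mod 4) * (pi/2) < \<phi>'" "\<phi>' < of_int (q mod 4 + 1) * (pi/2)"
      using assms(2,3) unfolding \<phi>'_def by (simp_all add: algebra_simps)
  qed
  ultimately show ?thesis
    using assms(1) Qsign_cis_quadrant[of "q mod 4" \<phi>'] by (simp add: Qsign_scaleR_pos)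
qed

lemma shifted_angle_quadrant:
  fixes j m M :: nat
  assumes M: "M \<ge> 1"
    and \<theta>: "real j * (pi / (2 * real M)) < \<theta>" "\<theta> < real (Suc j) * (pi / (2 * real M))"
  defines "q \<equiv> (j + m) div M"
  shows "of_int (int q) * (pi/2) < \<theta> + real m * (pi / (2 * real M))"
    and "\<theta> + real m * (pi / (2 * real M)) < of_int (int q + 1) * (pi/2)"
proof -
  define d where "d = pi / (2 * real M)"
  have d: "d > 0" "real M * d = pi / 2" using M by (simp_all add: d_def)
  have "q * M + (j + m) mod M = j + m" unfolding q_def by (rule div_mult_mod_eq)
  moreover have "(j + m) mod M < M" using M by simp
  ultimately have le: "q * M \<le> j + m" "Suc (j + m) \<le> q * M + M" by linarith+
  have "of_int (int q) * (pi/2) = real (q * M) * d"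
    by (simp add: d(2)[symmetric] algebra_simps)
  also have "\<dots> \<le> real (j + m) * d"
    by (rule mult_right_mono[OF of_nat_mono[OF le(1)]]) (use d in simp)
  also have "\<dots> < \<theta> + real m * d"
    using \<theta>(1) unfolding d_def[symmetric] by (simp add: algebra_simps)
  finally show "of_int (int q) * (pi/2) < \<theta> + real m * (pi / (2 * real M))"
    by (simp add: d_def)
  have "\<theta> + real m * d < real (Suc (j + m)) * d"
    using \<theta>(2) unfolding d_def[symmetric] by (simp add: algebra_simps)
  also have "\<dots> \<le> real (q * M + M) * d"
    by (rule mult_right_mono[OF of_nat_mono[OF le(2)]]) (use d in simp)
  also have "\<dots> = of_int (int q + 1) * (pi/2)"
    by (simp add: d(2)[symmetric] algebra_simps)
  finally show "\<theta> + real m * (pi / (2 * real M)) < of_int (int q + 1) * (pi/2)"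
    by (simp add: d_def)
qed

lemma Qsign_equi_arc:
  assumes M: "M \<ge> 1"
    and z: "z \<in> sector (real j * (pi / (2 * real M))) (real (Suc j) * (pi / (2 * real M)))"
    and m: "m < M"
  shows "Qsign (equi_pilot M m * z) = quadrant_code (int (((j + m) div M) mod 4))"
proof -
  have "real j * (pi / (2 * real M)) < real (Suc j) * (pi / (2 * real M))"
    "real (Suc j) * (pi / (2 * real M)) - real j * (pi / (2 * real M)) \<le> pi"
    using M by (simp_all add: field_simps)
  then obtain \<theta> where \<theta>: "real j * (pi / (2 * real M)) < \<theta>" "\<theta> < real (Suc j) * (pi / (2 * real M))"
    and z_polar: "z = complex_of_real (cmod z) * cis \<theta>" and "cmod z > 0"
    using sector_polarE[OF z] by blast
  have "equi_pilot M m * z = complex_of_real (cmod z) * cis (\<theta> + real m * (pi / (2 * real M)))"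
    by (subst z_polar) (simp add: equi_pilot_eq_cis cis_mult[symmetric] mult_ac)
  also have "Qsign \<dots> = quadrant_code (int ((j + m) div M) mod 4)"
    using shifted_angle_quadrant[OF M \<theta>] \<open>cmod z > 0\<close> by (intro Qsign_quadrant) simp_all
  finally show ?thesis by (simp add: zmod_int)
qed

text \<open>Shifting by \<open>m = M - j\<^sub>2 mod M\<close> pushes \<open>j\<^sub>2\<close> into the next block of length \<open>M\<close>
  while \<open>j\<^sub>1\<close> stays in its block.\<close>

lemma quadrant_index_separates:
  fixes j1 j2 M :: nat
  assumes M: "M \<ge> 1" and j: "j1 < j2" "j2 < 4 * M"
  obtains m where "m < M" "((j1 + m) div M) mod 4 \<noteq> ((j2 + m) div M) mod 4"
proof (cases "j1 div M = j2 div M")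
  case False
  have "j1 div M < 4" "j2 div M < 4" using j M by (simp_all add: div_less_iff_less_mult)
  then show ?thesis using False M that[of 0] by simp
next
  case True
  define Q where "Q = j1 div M"
  have s: "j1 = Q * M + j1 mod M" "j2 = Q * M + j2 mod M"
    using True div_mult_mod_eq[of j1 M] div_mult_mod_eq[of j2 M] by (simp_all add: Q_def)
  have smod: "j1 mod M < M" "j2 mod M < M" using M by simp_all
  have slt: "j1 mod M < j2 mod M" using s j(1) by linarith
  define m where "m = M - j2 mod M"
  have "(j1 + m) div M = Q"
  proof (rule div_nat_eqI)
    show "M * Q \<le> j1 + m" using s by (simp add: mult.commute)
    show "j1 + m < M * Suc Q" using s slt smod by (simp add: m_def algebra_simps)
  qed
  moreover have "(j2 + m) div M = Q + 1"
  proof -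
    have "j2 + m = (Q + 1) * M" using s smod by (simp add: m_def algebra_simps)
    then show ?thesis using M by simp
  qed
  moreover have "Q mod 4 \<noteq> (Q + 1) mod 4" by presburger
  ultimately show ?thesis using slt smod that[of m] by (simp add: m_def)
qed

lemma equi_decode_less:
  assumes M: "M \<ge> 1" and j: "j1 < j2" "j2 < 4 * M"
    and z1: "z1 \<in> sector (real j1 * (pi / (2 * real M))) (real (Suc j1) * (pi / (2 * real M)))"
    and z2: "z2 \<in> sector (real j2 * (pi / (2 * real M))) (real (Suc j2) * (pi / (2 * real M)))"
  shows "obs M (equi_pilot M) z1 \<noteq> obs M (equi_pilot M) z2"
proof -
  obtain m where m: "m < M" "((j1 + m) div M) mod 4 \<noteq> ((j2 + m) div M) mod 4"
    using quadrant_index_separates[OF M j] by blast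
  have "obs M (equi_pilot M) z1 m = quadrant_code (int (((j1 + m) div M) mod 4))"
    "obs M (equi_pilot M) z2 m = quadrant_code (int (((j2 + m) div M) mod 4))"
    using Qsign_equi_arc[OF M z1 m(1)] Qsign_equi_arc[OF M z2 m(1)] m(1) by (simp_all add: obs_def)
  moreover have "quadrant_code (int (((j1 + m) div M) mod 4)) \<noteq> quadrant_code (int (((j2 + m) div M) mod 4))"
    using m(2) by (intro quadrant_code_inj) auto
  ultimately show ?thesis by metis
qed

lemma equi_decode:
  assumes M: "M \<ge> 1" and j: "j1 < 4 * M" "j2 < 4 * M"
    and z1: "z1 \<in> sector (real j1 * (pi / (2 * real M))) (real (Suc j1) * (pi / (2 * real M)))"
    and z2: "z2 \<in> sector (real j2 * (pi / (2 * real M))) (real (Suc j2) * (pi / (2 * real M)))"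
    and eq: "obs M (equi_pilot M) z1 = obs M (equi_pilot M) z2"
  shows "j1 = j2"
proof (rule ccontr)
  assume "j1 \<noteq> j2"
  then consider "j1 < j2" | "j2 < j1" by linarith
  then show False
  proof cases
    case 1 then show False using equi_decode_less[OF M 1 j(2) z1 z2] eq by simp
  next
    case 2 then show False using equi_decode_less[OF M 2 j(1) z2 z1] eq by simp
  qed
qed

lemma crit_window_equiE:
  assumes M: "M \<ge> 1" and c: "c \<in> crit_window M (equi_pilot M) 0"
  obtains j where "j < 4 * M" "c = real j * (pi / (2 * real M))"
    "next_crit M (equi_pilot M) c = real (Suc j) * (pi / (2 * real M))"
proof -
  obtain j where j: "j < 4 * M" "c = real j * (pi / (2 * real M))"
    using c crit_window_equi[OF M] by auto
  have "next_crit M (equi_pilot M) c = real (Suc j) * (pi / (2 * real M))"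
    using next_crit_equi[OF M, of "int j"] j by simp
  then show ?thesis using that j by blast
qed

lemma obs_equi_eq_iff:
  assumes M: "M \<ge> 1" and c: "c \<in> crit_window M (equi_pilot M) 0" and c': "c' \<in> crit_window M (equi_pilot M) 0"
    and z: "z \<in> crit_arc M (equi_pilot M) c" and y: "y \<in> crit_arc M (equi_pilot M) c'"
  shows "obs M (equi_pilot M) y = obs M (equi_pilot M) z \<longleftrightarrow> c' = c"
proof
  assume obs_eq: "obs M (equi_pilot M) y = obs M (equi_pilot M) z"
  obtain j where j: "j < 4 * M" "c = real j * (pi / (2 * real M))"
    "next_crit M (equi_pilot M) c = real (Suc j) * (pi / (2 * real M))"
    using crit_window_equiE[OF M c] by blast
  obtain j' where j': "j' < 4 * M" "c' = real j' * (pi / (2 * real M))"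
    "next_crit M (equi_pilot M) c' = real (Suc j') * (pi / (2 * real M))"
    using crit_window_equiE[OF M c'] by blast
  have "j' = j" using equi_decode[OF M j'(1) j(1)] y z j j' obs_eq by simp
  then show "c' = c" using j j' by simp
next
  assume "c' = c"
  then show "obs M (equi_pilot M) y = obs M (equi_pilot M) z"
    using obs_eq_on_crit_arc[of c M "equi_pilot M" y z] c y z by (simp add: crit_window_def)
qed

section \<open>Optimality of the equidistant pilot\<close>

context rotation_invariant_measure
begin

lemma cme_bounded: "\<exists>B. \<forall>z. cmod (cme \<mu> M a (obs M a z)) \<le> B"
proof -
  let ?S = "cme \<mu> M a ` range (obs M a)"
  have "finite ?S" using finite_obs_range by simp
  then obtain B where "\<forall>x\<in>?S. cmod x \<le> B" using finite_imp_bounded bounded_iff by blast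
  then show ?thesis by auto
qed

lemma integrable_mse: "integrable \<mu> (\<lambda>z. (cmod (z - cme \<mu> M a (obs M a z)))\<^sup>2)"
proof -
  obtain B where B: "\<And>z. cmod (cme \<mu> M a (obs M a z)) \<le> B" using cme_bounded by blast
  show ?thesis
  proof (rule Bochner_Integration.integrable_bound)
    show "integrable \<mu> (\<lambda>z. 2 * (cmod z)\<^sup>2 + 2 * B\<^sup>2)" using integrable_norm_square by simp
    have "(\<lambda>z. (cmod (z - cme \<mu> M a (obs M a z)))\<^sup>2) \<in> borel_measurable borel"
      by (rule measurable_compose_obs[where F="\<lambda>v z. (cmod (z - cme \<mu> M a v))\<^sup>2"]) simp
    then show "(\<lambda>z. (cmod (z - cme \<mu> M a (obs M a z)))\<^sup>2) \<in> borel_measurable \<mu>"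
      by (simp add: measurable_cong_sets[OF sets_eq_borel refl])
    show "AE z in \<mu>. norm ((cmod (z - cme \<mu> M a (obs M a z)))\<^sup>2) \<le> norm (2 * (cmod z)\<^sup>2 + 2 * B\<^sup>2)"
    proof (intro AE_I2)
      fix z
      let ?c = "cme \<mu> M a (obs M a z)"
      have b0: "0 \<le> B" using B[of z] norm_ge_zero order_trans by blast
      have "cmod (z - ?c) \<le> cmod z + B" using norm_triangle_ineq4[of z ?c] B[of z] by linarith
      then have "(cmod (z - ?c))\<^sup>2 \<le> (cmod z + B)\<^sup>2" by (simp add: power_mono)
      also have "\<dots> \<le> 2 * (cmod z)\<^sup>2 + 2 * B\<^sup>2"
        using sum_squares_bound[of "cmod z" B] by (simp add: power2_eq_square algebra_simps)
      finally show "norm ((cmod (z - ?c))\<^sup>2) \<le> norm (2 * (cmod z)\<^sup>2 + 2 * B\<^sup>2)" using b0 by simp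
    qed
  qed
qed

lemma ae_partition_crit_arcs:
  assumes t0: "t0 \<in> crit_angles M a"
  shows "ae_partition \<mu> (crit_window M a t0) (crit_arc M a)"
  unfolding ae_partition_def
proof (intro conjI ballI)
  show "disjoint_family_on (crit_arc M a) (crit_window M a t0)"
    using crit_arcs_disjoint[OF t0] by (auto simp: disjoint_family_on_def)
  have "(\<Union>c\<in>crit_window M a t0. angle_line c) \<in> null_sets \<mu>"
    using finite_crit_window by (intro null_sets_UN' countable_finite angle_line_null)
  then show "AE z in \<mu>. z \<in> (\<Union>c\<in>crit_window M a t0. crit_arc M a c)"
    by (rule AE_I') (use crit_arcs_cover[OF t0] in blast)
qed (simp_all add: finite_crit_window sets_eq_borel)

lemma mse_ge_crit_arcs:
  assumes t0: "t0 \<in> crit_angles M a"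
  shows "(LINT z|\<mu>. (cmod z)\<^sup>2) - (\<Sum>c\<in>crit_window M a t0. gain (crit_arc M a c)) \<le> mse \<mu> M a"
  unfolding mse_def
proof (rule integral_norm_diff_ge_ae_partition[OF ae_partition_crit_arcs[OF t0] integrable_mse])
  fix c z assume c: "c \<in> crit_window M a t0" and z: "z \<in> crit_arc M a c"
  have "(SOME z. z \<in> crit_arc M a c) \<in> crit_arc M a c" using z by (rule someI)
  then show "cme \<mu> M a (obs M a z) = cme \<mu> M a (obs M a (SOME z. z \<in> crit_arc M a c))"
    using obs_eq_on_crit_arc[of c M a z] c z by (simp add: crit_window_def)
qed

lemma measure_UNIV_eq_sum_crit_arcs:
  assumes t0: "t0 \<in> crit_angles M a"
  shows "measure \<mu> UNIV = (\<Sum>c\<in>crit_window M a t0. measure \<mu> (crit_arc M a c))"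
  using integral_ae_partition[OF ae_partition_crit_arcs[OF t0], of "\<lambda>_. 1"]
  by (simp add: sets_eq_borel)

lemma cme_eq_cell_mean:
  assumes S: "S \<in> sets borel" and ae: "AE y in \<mu>. obs M a y = obs M a z \<longleftrightarrow> y \<in> S"
  shows "cme \<mu> M a (obs M a z) = moment S / of_real (measure \<mu> S)"
proof -
  have A: "{y. obs M a y = obs M a z} \<in> sets borel" by (rule obs_level_set_borel)
  have "measure \<mu> {y. obs M a y = obs M a z} = measure \<mu> S"
    using ae A S by (intro measure_eq_AE) (simp_all add: sets_eq_borel)
  moreover have "(LINT y|\<mu>. indicator {y. obs M a y = obs M a z} y *\<^sub>R y) = moment S"
    unfolding moment_def
  proof (rule integral_cong_AE)
    show "(\<lambda>y. indicator {y. obs M a y = obs M a z} y *\<^sub>R y) \<in> borel_measurable \<mu>"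
      using A by (simp add: sets_eq_borel)
    show "AE y in \<mu>. indicator {y. obs M a y = obs M a z} y *\<^sub>R y = indicator S y *\<^sub>R y"
      using ae by eventually_elim (simp add: indicator_def)
  qed (use S in \<open>simp add: sets_eq_borel\<close>)
  ultimately show ?thesis by (simp add: cme_def)
qed

lemma cme_equi:
  assumes M: "M \<ge> 1" and c: "c \<in> crit_window M (equi_pilot M) 0"
    and z: "z \<in> crit_arc M (equi_pilot M) c"
  shows "cme \<mu> M (equi_pilot M) (obs M (equi_pilot M) z)
       = moment (crit_arc M (equi_pilot M) c) / of_real (measure \<mu> (crit_arc M (equi_pilot M) c))"
proof (rule cme_eq_cell_mean)
  have t0: "0 \<in> crit_angles M (equi_pilot M)"
    using crit_angles_equi[OF M] by (auto intro!: image_eqI[of _ _ 0])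
  have "AE y in \<mu>. y \<in> (\<Union>c'\<in>crit_window M (equi_pilot M) 0. crit_arc M (equi_pilot M) c')"
    using ae_partition_crit_arcs[OF t0] by (simp add: ae_partition_def)
  then show "AE y in \<mu>. obs M (equi_pilot M) y = obs M (equi_pilot M) z \<longleftrightarrow> y \<in> crit_arc M (equi_pilot M) c"
  proof eventually_elim
    fix y assume "y \<in> (\<Union>c'\<in>crit_window M (equi_pilot M) 0. crit_arc M (equi_pilot M) c')"
    then obtain c' where c': "c' \<in> crit_window M (equi_pilot M) 0" "y \<in> crit_arc M (equi_pilot M) c'"
      by blast
    then have "y \<in> crit_arc M (equi_pilot M) c \<longleftrightarrow> c' = c"
      using crit_arcs_disjoint[OF t0 c'(1) c] by blast
    then show "obs M (equi_pilot M) y = obs M (equi_pilot M) z \<longleftrightarrow> y \<in> crit_arc M (equi_pilot M) c"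
      using obs_equi_eq_iff[OF M c c'(1) z c'(2)] by simp
  qed
qed simp

lemma next_crit_equi_window:
  assumes M: "M \<ge> 1" and c: "c \<in> crit_window M (equi_pilot M) 0"
  shows "next_crit M (equi_pilot M) c = c + pi / (2 * real M)"
proof -
  obtain j where j: "c = real j * (pi / (2 * real M))" "next_crit M (equi_pilot M) c = real (Suc j) * (pi / (2 * real M))"
    using crit_window_equiE[OF M c] by blast
  then show ?thesis by (simp add: algebra_simps add_divide_distrib)
qed

lemma mse_equi:
  assumes M: "M \<ge> 1"
  shows "mse \<mu> M (equi_pilot M)
       = (LINT z|\<mu>. (cmod z)\<^sup>2) - real (4 * M) * (gain_const * psi (pi / (2 * real M)))"
proof -
  have t0: "0 \<in> crit_angles M (equi_pilot M)"
    using crit_angles_equi[OF M] by (auto intro!: image_eqI[of _ _ 0])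
  have d: "0 < pi / (2 * real M)" "pi / (2 * real M) \<le> pi / 2"
    using M by (simp_all add: field_simps)
  have "mse \<mu> M (equi_pilot M)
      = (LINT z|\<mu>. (cmod z)\<^sup>2) - (\<Sum>c\<in>crit_window M (equi_pilot M) 0. gain (crit_arc M (equi_pilot M) c))"
    unfolding mse_def
    by (rule integral_norm_diff_eq_ae_partition[OF ae_partition_crit_arcs[OF t0] integrable_mse])
       (rule cme_equi[OF M])
  also have "\<dots> = (LINT z|\<mu>. (cmod z)\<^sup>2) - (\<Sum>c\<in>crit_window M (equi_pilot M) 0. gain_const * psi (pi / (2 * real M)))"
    by (simp add: next_crit_equi_window[OF M] gain_sector[OF d])
  also have "\<dots> = (LINT z|\<mu>. (cmod z)\<^sup>2) - real (4 * M) * (gain_const * psi (pi / (2 * real M)))"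
    using card_crit_window_equi[OF M] by simp
  finally show ?thesis .
qed

lemma measure_UNIV_eq_4_sector_measure: "measure \<mu> UNIV = 4 * sector_measure (pi/2)"
proof -
  have M: "(1::nat) \<ge> 1" by simp
  have t0: "0 \<in> crit_angles 1 (equi_pilot 1)" using crit_angles_equi[OF M] by (auto intro!: image_eqI[of _ _ 0])
  have "measure \<mu> UNIV = (\<Sum>c\<in>crit_window 1 (equi_pilot 1) 0. measure \<mu> (crit_arc 1 (equi_pilot 1) c))"
    by (rule measure_UNIV_eq_sum_crit_arcs[OF t0])
  also have "\<dots> = (\<Sum>c\<in>crit_window 1 (equi_pilot 1) 0. sector_measure (pi/2))"
  proof (intro sum.cong refl)
    fix c assume c: "c \<in> crit_window 1 (equi_pilot 1) 0"
    have "next_crit 1 (equi_pilot 1) c = c + pi / (2 * real (1::nat))" by (rule next_crit_equi_window[OF M c])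
    then have e: "next_crit 1 (equi_pilot 1) c = c + pi / 2" by simp
    show "measure \<mu> (crit_arc 1 (equi_pilot 1) c) = sector_measure (pi/2)" unfolding e by (rule measure_sector_eq)
  qed
  also have "\<dots> = 4 * sector_measure (pi/2)" using card_crit_window_equi[OF M] by simp
  finally show ?thesis .
qed


text \<open>The widths of the arcs are read off from their measures, which are proportional to them.\<close>

lemma sum_crit_arc_widths:
  assumes t0: "t0 \<in> crit_angles M a" and pos: "sector_measure (pi/2) > 0"
  shows "(\<Sum>c\<in>crit_window M a t0. next_crit M a c - c) = 2 * pi"
proof -
  have "4 * sector_measure (pi/2) = (\<Sum>c\<in>crit_window M a t0. measure \<mu> (crit_arc M a c))"
    using measure_UNIV_eq_4_sector_measure measure_UNIV_eq_sum_crit_arcs[OF t0] by simp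
  also have "\<dots> = (\<Sum>c\<in>crit_window M a t0. (2 * (next_crit M a c - c) / pi) * sector_measure (pi/2))"
  proof (intro sum.cong refl)
    fix c assume c: "c \<in> crit_window M a t0"
    have "measure \<mu> (crit_arc M a c) = sector_measure (next_crit M a c - c)"
      using measure_sector_eq[of c "next_crit M a c - c"] by simp
    also have "\<dots> = (2 * (next_crit M a c - c) / pi) * sector_measure (pi/2)"
      using crit_arc_width[OF c] by (rule sector_measure_linear)
    finally show "measure \<mu> (crit_arc M a c) = (2 * (next_crit M a c - c) / pi) * sector_measure (pi/2)" .
  qed
  also have "\<dots> = (2 / pi) * sector_measure (pi/2) * (\<Sum>c\<in>crit_window M a t0. next_crit M a c - c)"
    unfolding sum_distrib_left by (intro sum.cong refl) (simp add: field_simps)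
  finally show ?thesis using pos by (simp add: field_simps)
qed

lemma sum_gain_crit_arcs_le:
  assumes t0: "t0 \<in> crit_angles M a" and M: "M \<ge> 1"
  shows "(\<Sum>c\<in>crit_window M a t0. gain (crit_arc M a c)) \<le> real (4 * M) * (gain_const * psi (pi / (2 * real M)))"
proof -
  have "(\<Sum>c\<in>crit_window M a t0. gain (crit_arc M a c)) = gain_const * (\<Sum>c\<in>crit_window M a t0. psi (next_crit M a c - c))"
    unfolding sum_distrib_left
  proof (intro sum.cong refl)
    fix c assume c: "c \<in> crit_window M a t0"
    show "gain (crit_arc M a c) = gain_const * psi (next_crit M a c - c)"
      using gain_sector[OF crit_arc_width[OF c], of c] by simp
  qed
  also have "\<dots> \<le> gain_const * (real (4 * M) * psi (pi / (2 * real M)))"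
  proof (cases "sector_measure (pi/2) = 0")
    case False
    then have "sector_measure (pi/2) > 0" using sector_measure_nonneg[of "pi/2"] by simp
    have "(\<Sum>c\<in>crit_window M a t0. psi (next_crit M a c - c)) \<le> real (4 * M) * psi (pi / (2 * real M))"
    proof (rule sum_psi_le)
      show "real (card (crit_window M a t0)) \<le> real (4 * M)"
        using card_crit_window_le[of M a t0] by simp
      show "(\<Sum>c\<in>crit_window M a t0. next_crit M a c - c) = 2 * pi"
        using sum_crit_arc_widths[OF t0 \<open>sector_measure (pi/2) > 0\<close>] .
      show "0 < pi / (2 * real M)" "pi / (2 * real M) \<le> pi / 2" "real (4 * M) * (pi / (2 * real M)) = 2 * pi"
        using M by (simp_all add: field_simps)
    qed (use crit_arc_width finite_crit_window in auto)
    then show ?thesis using gain_const_nonneg by (rule mult_left_mono)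
  qed (simp add: gain_const_def)
  finally show ?thesis by (simp add: mult_ac)
qed

lemma mse_equi_le:
  assumes "m < M" "a m \<noteq> 0"
  shows "mse \<mu> M (equi_pilot M) \<le> mse \<mu> M a"
proof -
  have t0: "- Arg (a m) \<in> crit_angles M a"
    unfolding crit_angles_def using assms by (intro CollectI exI[of _ 0] exI[of _ m]) simp
  have M: "M \<ge> 1" using assms by simp
  show ?thesis
    using mse_equi[OF M] mse_ge_crit_arcs[OF t0] sum_gain_crit_arcs_le[OF t0 M] by linarith
qed

end

theorem theorem4:
  fixes K M :: nat and p s2 :: "nat \<Rightarrow> real" and a :: "nat \<Rightarrow> complex"
  assumes "\<forall>k<K. p k > 0"
    and "(\<Sum>k<K. p k) = 1"
    and "\<forall>k<K. s2 k > 0"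
    and "(\<Sum>m<M. (cmod (a m))^2) = real M"
  shows "mse (gm_measure K p s2) M (equi_pilot M) \<le> mse (gm_measure K p s2) M a"
proof (cases "\<exists>m<M. a m \<noteq> 0")
  case True
  then obtain m where "m < M" "a m \<noteq> 0" by blast
  interpret rotation_invariant_measure "gm_measure K p s2"
    using rotation_invariant_measure_gm_measure assms(1,3) .
  show ?thesis by (rule mse_equi_le) fact+
next
  case False
  then have "(\<Sum>m<M. (cmod (a m))^2) = 0" by simp
  then have "M = 0" using assms(4) by simp
  then have "obs M a = obs M (equi_pilot M)" by (simp add: obs_def fun_eq_iff)
  then show ?thesis by (simp add: mse_def cme_def)
qed

end
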